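(* Let $G$ be a finitely generated group which is either a free product $G=H*_F K$ of finitely generated groups $H$ and $K$ amalgamating finite subgroups of $H$ and $K$, or an HNN extension with finitely generated base group $H$ and two finite associated subgroups of $H$. Then there is a finite generating set $S_H$ of $H$, closed under inverses, and a finite generating set $S_G\supseteq S_H$ of $G$, closed under inverses, such that $d_H(h_1,h_2)=d_G(h_1,h_2)$ for all $h_1,h_2\in H$, where $d_H$ and $d_G$ are the word metrics with respect to $S_H$ and $S_G$ respectively.
   Context: For a group $X$ with finite generating set $T$ closed under inverses, the word metric is $d(x,x')$ = length of a shortest word in $T$ representing $x^{-1}x'$. *)

theory Defs
  imports "HOL-Algebra.Algebra"
begin

definition word_prod :: "('g,'b) monoid_scheme \<Rightarrow> 'g list \<Rightarrow> 'g" where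
  "word_prod G ws = foldr (\<lambda>s acc. s \<otimes>\<^bsub>G\<^esub> acc) ws \<one>\<^bsub>G\<^esub>"

definition word_dist :: "('g,'b) monoid_scheme \<Rightarrow> 'g set \<Rightarrow> 'g \<Rightarrow> 'g \<Rightarrow> nat" where
  "word_dist G S x y =
     (LEAST n. \<exists>ws. length ws = n \<and> set ws \<subseteq> S \<and> word_prod G ws = inv\<^bsub>G\<^esub> x \<otimes>\<^bsub>G\<^esub> y)"

definition finitely_generated :: "('g,'b) monoid_scheme \<Rightarrow> bool" where
  "finitely_generated G \<longleftrightarrow> (\<exists>S. finite S \<and> S \<subseteq> carrier G \<and> generate G S = carrier G)"

inductive cong_gen :: "('x list \<Rightarrow> 'x list \<Rightarrow> bool) \<Rightarrow> 'x list \<Rightarrow> 'x list \<Rightarrow> bool"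
  for R where
  base: "R u v \<Longrightarrow> cong_gen R u v"
| refl: "cong_gen R u u"
| sym: "cong_gen R u v \<Longrightarrow> cong_gen R v u"
| trans: "cong_gen R u v \<Longrightarrow> cong_gen R v w \<Longrightarrow> cong_gen R u w"
| ctxt: "cong_gen R u v \<Longrightarrow> cong_gen R (x @ u @ y) (x @ v @ y)"

definition pres_class :: "'x set \<Rightarrow> ('x list \<Rightarrow> 'x list \<Rightarrow> bool) \<Rightarrow> 'x list \<Rightarrow> 'x list set" where
  "pres_class Y R u = {v \<in> lists Y. cong_gen R u v}"

definition presented :: "'x set \<Rightarrow> ('x list \<Rightarrow> 'x list \<Rightarrow> bool) \<Rightarrow> ('x list set) monoid" where
  "presented Y R =
    \<lparr> partial_object.carrier = pres_class Y R ` lists Y,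
      monoid.mult = (\<lambda>P Q. {w \<in> lists Y. \<exists>u\<in>P. \<exists>v\<in>Q. cong_gen R (u @ v) w}),
      monoid.one = pres_class Y R [] \<rparr>"

definition amalg_gens :: "('a,'c) monoid_scheme \<Rightarrow> ('k,'d) monoid_scheme \<Rightarrow> ('a + 'k) set" where
  "amalg_gens H K = Inl ` carrier H \<union> Inr ` carrier K"

definition amalg_rel :: "('a,'c) monoid_scheme \<Rightarrow> ('k,'d) monoid_scheme \<Rightarrow> 'a set \<Rightarrow> ('a \<Rightarrow> 'k)
    \<Rightarrow> ('a + 'k) list \<Rightarrow> ('a + 'k) list \<Rightarrow> bool" where
  "amalg_rel H K A \<phi> u v \<longleftrightarrow>
     (\<exists>a\<in>carrier H. \<exists>b\<in>carrier H. u = [Inl a, Inl b] \<and> v = [Inl (a \<otimes>\<^bsub>H\<^esub> b)])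
   \<or> (u = [Inl \<one>\<^bsub>H\<^esub>] \<and> v = [])
   \<or> (\<exists>a\<in>carrier K. \<exists>b\<in>carrier K. u = [Inr a, Inr b] \<and> v = [Inr (a \<otimes>\<^bsub>K\<^esub> b)])
   \<or> (u = [Inr \<one>\<^bsub>K\<^esub>] \<and> v = [])
   \<or> (\<exists>a\<in>A. u = [Inl a] \<and> v = [Inr (\<phi> a)])"

definition amalg :: "('a,'c) monoid_scheme \<Rightarrow> ('k,'d) monoid_scheme \<Rightarrow> 'a set \<Rightarrow> ('a \<Rightarrow> 'k)
    \<Rightarrow> (('a + 'k) list set) monoid" where
  "amalg H K A \<phi> = presented (amalg_gens H K) (amalg_rel H K A \<phi>)"

definition amalg_incl :: "('a,'c) monoid_scheme \<Rightarrow> ('k,'d) monoid_scheme \<Rightarrow> 'a set \<Rightarrow> ('a \<Rightarrow> 'k)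
    \<Rightarrow> 'a \<Rightarrow> ('a + 'k) list set" where
  "amalg_incl H K A \<phi> h = pres_class (amalg_gens H K) (amalg_rel H K A \<phi>) [Inl h]"

text \<open>Generators: elements of H (Inl), stable letter t = Inr True, t^{-1} = Inr False.
  Relations: multiplication table of H, t t^{-1} = 1 = t^{-1} t, and t^{-1} a t = phi a.\<close>
definition hnn_gens :: "('a,'c) monoid_scheme \<Rightarrow> ('a + bool) set" where
  "hnn_gens H = Inl ` carrier H \<union> Inr ` UNIV"

definition hnn_rel :: "('a,'c) monoid_scheme \<Rightarrow> 'a set \<Rightarrow> ('a \<Rightarrow> 'a)
    \<Rightarrow> ('a + bool) list \<Rightarrow> ('a + bool) list \<Rightarrow> bool" where
  "hnn_rel H A \<phi> u v \<longleftrightarrow>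
     (\<exists>a\<in>carrier H. \<exists>b\<in>carrier H. u = [Inl a, Inl b] \<and> v = [Inl (a \<otimes>\<^bsub>H\<^esub> b)])
   \<or> (u = [Inl \<one>\<^bsub>H\<^esub>] \<and> v = [])
   \<or> (u = [Inr True, Inr False] \<and> v = [])
   \<or> (u = [Inr False, Inr True] \<and> v = [])
   \<or> (\<exists>a\<in>A. u = [Inr False, Inl a, Inr True] \<and> v = [Inl (\<phi> a)])"

definition hnn :: "('a,'c) monoid_scheme \<Rightarrow> 'a set \<Rightarrow> ('a \<Rightarrow> 'a) \<Rightarrow> (('a + bool) list set) monoid" where
  "hnn H A \<phi> = presented (hnn_gens H) (hnn_rel H A \<phi>)"

definition hnn_incl :: "('a,'c) monoid_scheme \<Rightarrow> 'a set \<Rightarrow> ('a \<Rightarrow> 'a) \<Rightarrow> 'a \<Rightarrow> ('a + bool) list set" where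
  "hnn_incl H A \<phi> h = pres_class (hnn_gens H) (hnn_rel H A \<phi>) [Inl h]"

end

theory Submission
  imports Defs
begin

(* Take S_H finite, symmetric, generating H and containing the finite associated subgroups, and
   let S_G consist of the image of S_H together with a finite symmetric generating set of K
   (respectively the stable letters t, t^-1). As S_H maps into S_G, d_G <= d_H on H. Conversely,
   a word over S_G representing an element of H is shortened step by step, in the larger alphabet
   S_H + (all of K) (respectively S_H + {t, t^-1}): a letter of B is replaced by the letter of A
   amalgamated with it, and a subword k w k' (respectively t^e w t^-e) in which w represents an
   element of the associated subgroup collapses to a single letter; this is where S_H must
   contain the associated subgroups. A word admitting no such step and containing a letter
   outside H does not represent an element of H, by the normal form theorem, which is proved via
   the van der Waerden action of the letters on reduced sequences of coset representatives. So
   the process ends in a word over S_H that is no longer than the original one. *)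

section \<open>Words and word metrics\<close>

lemma word_prod_Nil [simp]: "word_prod G [] = \<one>\<^bsub>G\<^esub>"
  by (simp add: word_prod_def)

lemma word_prod_Cons [simp]: "word_prod G (x # xs) = x \<otimes>\<^bsub>G\<^esub> word_prod G xs"
  by (simp add: word_prod_def)

lemma (in monoid) word_prod_closed: "set xs \<subseteq> carrier G \<Longrightarrow> word_prod G xs \<in> carrier G"
  by (induction xs) auto

lemma (in monoid) word_prod_append:
  "set xs \<subseteq> carrier G \<Longrightarrow> set ys \<subseteq> carrier G \<Longrightarrow>
    word_prod G (xs @ ys) = word_prod G xs \<otimes> word_prod G ys"
  by (induction xs) (auto simp: m_assoc word_prod_closed)

lemma (in group_hom) word_prod_map:
  "set xs \<subseteq> carrier G \<Longrightarrow> word_prod H (map h xs) = h (word_prod G xs)"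
  by (induction xs) (auto simp: G.word_prod_closed)

lemma (in group_hom) image_generate_subset:
  assumes "S \<subseteq> carrier G" "h ` S \<subseteq> T" "T \<subseteq> carrier H"
  shows "h ` generate G S \<subseteq> generate H T"
  using generate_img[OF assms(1)] H.mono_generate[OF assms(2)] by simp

lemma (in group) word_prod_of_generate:
  assumes "S \<subseteq> carrier G" "\<forall>s\<in>S. inv s \<in> S" "x \<in> generate G S"
  shows "\<exists>ws. set ws \<subseteq> S \<and> word_prod G ws = x"
  using assms(3)
proof induction
  case one
  show ?case by (intro exI[of _ "[]"]) simp
next
  case (incl s)
  then show ?case using assms(1) by (intro exI[of _ "[s]"]) auto
next
  case (inv s)
  then show ?case using assms by (intro exI[of _ "[inv s]"]) auto
next
  case (eng x y)
  then obtain xs ys where "set xs \<subseteq> S" "word_prod G xs = x" "set ys \<subseteq> S" "word_prod G ys = y"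
    by blast
  then show ?case
    using assms(1) by (intro exI[of _ "xs @ ys"]) (auto simp: word_prod_append)
qed

lemma (in group) finite_symmetric_generating_set:
  assumes "finitely_generated G" "finite E" "E \<subseteq> carrier G"
  obtains S where "finite S" "S \<subseteq> carrier G" "\<forall>s\<in>S. inv s \<in> S"
    "generate G S = carrier G" "E \<subseteq> S"
proof -
  obtain S0 where S0: "finite S0" "S0 \<subseteq> carrier G" "generate G S0 = carrier G"
    using assms(1) by (auto simp: finitely_generated_def)
  define S where "S = S0 \<union> E \<union> (\<lambda>s. inv s) ` (S0 \<union> E)"
  have "S \<subseteq> carrier G" using S0(2) assms(3) by (auto simp: S_def)
  moreover have "carrier G \<subseteq> generate G S"
    using mono_generate[of S0 S] S0(3) by (auto simp: S_def)
  ultimately have "generate G S = carrier G" using generate_incl by blast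
  moreover have "\<forall>s\<in>S. inv s \<in> S" using S0(2) assms(3) by (auto simp: S_def subset_iff)
  ultimately show thesis
    using that[of S] S0 \<open>S \<subseteq> carrier G\<close> assms(2) by (auto simp: S_def)
qed

lemma word_dist_le:
  "set ws \<subseteq> S \<Longrightarrow> word_prod G ws = inv\<^bsub>G\<^esub> x \<otimes>\<^bsub>G\<^esub> y \<Longrightarrow> word_dist G S x y \<le> length ws"
  unfolding word_dist_def by (rule Least_le) auto

lemma word_dist_witness:
  assumes "set ws \<subseteq> S" "word_prod G ws = inv\<^bsub>G\<^esub> x \<otimes>\<^bsub>G\<^esub> y"
  obtains vs where "length vs = word_dist G S x y" "set vs \<subseteq> S"
    "word_prod G vs = inv\<^bsub>G\<^esub> x \<otimes>\<^bsub>G\<^esub> y"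
proof -
  have "\<exists>n ws. length ws = n \<and> set ws \<subseteq> S \<and> word_prod G ws = inv\<^bsub>G\<^esub> x \<otimes>\<^bsub>G\<^esub> y"
    using assms by blast
  from LeastI_ex[OF this] show thesis using that unfolding word_dist_def by blast
qed

lemma (in group_hom) word_dist_eq_if_shortening:
  assumes S: "S \<subseteq> carrier G" "\<forall>s\<in>S. inv s \<in> S" "generate G S = carrier G"
    and "h ` S \<subseteq> T"
    and shorten: "\<And>ws g. set ws \<subseteq> T \<Longrightarrow> g \<in> carrier G \<Longrightarrow> word_prod H ws = h g \<Longrightarrow>
                   \<exists>vs. set vs \<subseteq> S \<and> length vs \<le> length ws \<and> word_prod G vs = g"
    and xy: "x \<in> carrier G" "y \<in> carrier G"
  shows "word_dist G S x y = word_dist H T (h x) (h y)"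
proof -
  have hxy: "inv\<^bsub>H\<^esub> h x \<otimes>\<^bsub>H\<^esub> h y = h (inv x \<otimes> y)" using xy by simp
  obtain us where us: "set us \<subseteq> S" "word_prod G us = inv x \<otimes> y"
    using G.word_prod_of_generate[OF S(1,2)] S(3) xy by (metis G.inv_closed G.m_closed)
  then obtain vs where vs: "length vs = word_dist G S x y" "set vs \<subseteq> S" "word_prod G vs = inv x \<otimes> y"
    by (rule word_dist_witness)
  have image_word: "set (map h vs) \<subseteq> T" "word_prod H (map h vs) = inv\<^bsub>H\<^esub> h x \<otimes>\<^bsub>H\<^esub> h y"
    using vs S(1) assms(4) by (auto simp: word_prod_map hxy)
  then obtain ws where ws: "length ws = word_dist H T (h x) (h y)" "set ws \<subseteq> T"
      "word_prod H ws = h (inv x \<otimes> y)"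
    using hxy by (metis word_dist_witness)
  obtain vs' where "set vs' \<subseteq> S" "length vs' \<le> length ws" "word_prod G vs' = inv x \<otimes> y"
    using shorten[OF ws(2) _ ws(3)] xy by auto
  then have "word_dist G S x y \<le> word_dist H T (h x) (h y)"
    using word_dist_le[of vs' S G x y] ws(1) by simp
  moreover have "word_dist H T (h x) (h y) \<le> word_dist G S x y"
    using word_dist_le[OF image_word] vs(1) by simp
  ultimately show ?thesis by simp
qed

lemma split_Inl_prefix:
  "w \<in> lists (Inl ` S \<union> Inr ` T) \<Longrightarrow> \<exists>hs v. w = map Inl hs @ v \<and> set hs \<subseteq> S \<and>
    (v = [] \<or> (\<exists>t v'. v = Inr t # v' \<and> t \<in> T \<and> v' \<in> lists (Inl ` S \<union> Inr ` T)))"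
proof (induction w)
  case (Cons y w)
  then obtain hs v where hv: "w = map Inl hs @ v" "set hs \<subseteq> S"
    "v = [] \<or> (\<exists>t v'. v = Inr t # v' \<and> t \<in> T \<and> v' \<in> lists (Inl ` S \<union> Inr ` T))"
    by auto
  show ?case
  proof (cases y)
    case (Inl s)
    with Cons.prems have "s \<in> S" by auto
    then show ?thesis using hv Inl by (intro exI[of _ "s # hs"] exI[of _ v]) auto
  next
    case (Inr t)
    then show ?thesis using Cons.prems by (intro exI[of _ "[]"] exI[of _ "y # w"]) auto
  qed
qed simp

section \<open>Presented groups\<close>

lemma cong_gen_append:
  assumes "cong_gen R u u'" "cong_gen R v v'"
  shows "cong_gen R (u @ v) (u' @ v')"
  using cong_gen.ctxt[OF assms(1), of "[]" v] cong_gen.ctxt[OF assms(2), of u' "[]"]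
  by (auto intro: cong_gen.trans)

lemma cong_gen_lists:
  assumes "cong_gen R u v" "\<And>u v. R u v \<Longrightarrow> u \<in> lists Y \<and> v \<in> lists Y"
  shows "u \<in> lists Y \<longleftrightarrow> v \<in> lists Y"
  using assms(1) by induction (use assms(2) in auto)

lemma pres_class_eq_iff:
  assumes "u \<in> lists Y" "v \<in> lists Y"
  shows "pres_class Y R u = pres_class Y R v \<longleftrightarrow> cong_gen R u v"
proof
  assume "pres_class Y R u = pres_class Y R v"
  moreover have "v \<in> pres_class Y R v" using assms by (simp add: pres_class_def cong_gen.refl)
  ultimately show "cong_gen R u v" by (auto simp: pres_class_def)
qed (auto simp: pres_class_def intro: cong_gen.trans cong_gen.sym)

lemma carrier_presented: "carrier (presented Y R) = pres_class Y R ` lists Y"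
  by (simp add: presented_def)

lemma one_presented: "\<one>\<^bsub>presented Y R\<^esub> = pres_class Y R []"
  by (simp add: presented_def)

lemma pres_class_mult:
  assumes "u \<in> lists Y" "v \<in> lists Y"
  shows "pres_class Y R u \<otimes>\<^bsub>presented Y R\<^esub> pres_class Y R v = pres_class Y R (u @ v)"
proof -
  have "u \<in> pres_class Y R u" "v \<in> pres_class Y R v"
    using assms by (simp_all add: pres_class_def cong_gen.refl)
  then show ?thesis
    by (auto simp: presented_def pres_class_def intro: cong_gen.trans cong_gen_append)
qed

lemma monoid_presented: "monoid (presented Y R)"
proof (rule monoidI)
  fix x y z assume "x \<in> carrier (presented Y R)" "y \<in> carrier (presented Y R)"
    "z \<in> carrier (presented Y R)"
  then obtain u v w where "u \<in> lists Y" "v \<in> lists Y" "w \<in> lists Y"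
    "x = pres_class Y R u" "y = pres_class Y R v" "z = pres_class Y R w"
    by (auto simp: carrier_presented)
  then show "x \<otimes>\<^bsub>presented Y R\<^esub> y \<in> carrier (presented Y R)"
    "x \<otimes>\<^bsub>presented Y R\<^esub> y \<otimes>\<^bsub>presented Y R\<^esub> z =
     x \<otimes>\<^bsub>presented Y R\<^esub> (y \<otimes>\<^bsub>presented Y R\<^esub> z)"
    "\<one>\<^bsub>presented Y R\<^esub> \<otimes>\<^bsub>presented Y R\<^esub> x = x"
    "x \<otimes>\<^bsub>presented Y R\<^esub> \<one>\<^bsub>presented Y R\<^esub> = x"
    by (simp_all add: pres_class_mult carrier_presented one_presented)
qed (simp add: one_presented carrier_presented)

lemma group_presented:
  assumes iv: "\<And>y. y \<in> Y \<Longrightarrow> iv y \<in> Y \<and> cong_gen R [iv y, y] []"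
  shows "group (presented Y R)"
proof -
  interpret monoid "presented Y R" by (rule monoid_presented)
  have left_inverse: "rev (map iv u) \<in> lists Y \<and> cong_gen R (rev (map iv u) @ u) []"
    if "u \<in> lists Y" for u
    using that
  proof (induction u)
    case (Cons y u)
    then have "cong_gen R (rev (map iv u) @ [iv y, y] @ u) (rev (map iv u) @ [] @ u)"
      using iv by (blast intro: cong_gen.ctxt)
    with Cons iv show ?case by (auto intro: cong_gen.trans)
  qed (simp add: cong_gen.refl)
  show ?thesis
  proof (rule group_l_invI)
    fix x assume "x \<in> carrier (presented Y R)"
    then obtain u where u: "u \<in> lists Y" "x = pres_class Y R u" by (auto simp: carrier_presented)
    with left_inverse[OF u(1)] show "\<exists>y\<in>carrier (presented Y R). y \<otimes>\<^bsub>presented Y R\<^esub> x = \<one>\<^bsub>presented Y R\<^esub>"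
      by (intro bexI[of _ "pres_class Y R (rev (map iv u))"])
         (auto simp: pres_class_mult one_presented carrier_presented pres_class_eq_iff)
  qed
qed

lemma inv_pres_class:
  assumes iv: "\<And>y. y \<in> Y \<Longrightarrow> iv y \<in> Y \<and> cong_gen R [iv y, y] []" and "y \<in> Y"
  shows "inv\<^bsub>presented Y R\<^esub> (pres_class Y R [y]) = pres_class Y R [iv y]"
proof -
  interpret group "presented Y R" by (rule group_presented[OF iv])
  show ?thesis
    using iv[OF \<open>y \<in> Y\<close>] \<open>y \<in> Y\<close>
    by (intro inv_equality) (auto simp: pres_class_mult one_presented carrier_presented pres_class_eq_iff)
qed

lemma word_prod_pres_class:
  "u \<in> lists Y \<Longrightarrow> word_prod (presented Y R) (map (\<lambda>y. pres_class Y R [y]) u) = pres_class Y R u"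
proof (induction u)
  case (Cons y u)
  then show ?case using pres_class_mult[of "[y]" Y u R] by simp
qed (simp add: one_presented)

lemma presented_generateI:
  assumes "group (presented Y R)" "T \<subseteq> carrier (presented Y R)"
    and "\<And>y. y \<in> Y \<Longrightarrow> pres_class Y R [y] \<in> generate (presented Y R) T"
  shows "generate (presented Y R) T = carrier (presented Y R)"
proof
  interpret group "presented Y R" by fact
  show "generate (presented Y R) T \<subseteq> carrier (presented Y R)" by (rule generate_incl[OF assms(2)])
  have "pres_class Y R u \<in> generate (presented Y R) T" if "u \<in> lists Y" for u
    using that
  proof (induction u)
    case Nil
    show ?case using generate.one[of "presented Y R" T] by (simp add: one_presented)
  next
    case (Cons y u)
    then show ?case
      using pres_class_mult[of "[y]" Y u R] generate.eng[OF assms(3), of y "pres_class Y R u"] by simp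
  qed
  then show "carrier (presented Y R) \<subseteq> generate (presented Y R) T" by (auto simp: carrier_presented)
qed

lemma hom_presented_letters:
  assumes "monoid H" "j ` carrier H \<subseteq> Y"
    and mult: "\<And>a b. a \<in> carrier H \<Longrightarrow> b \<in> carrier H \<Longrightarrow> cong_gen R [j a, j b] [j (a \<otimes>\<^bsub>H\<^esub> b)]"
  shows "(\<lambda>h. pres_class Y R [j h]) \<in> hom H (presented Y R)"
proof (rule homI)
  fix a assume "a \<in> carrier H"
  then have "[j a] \<in> lists Y" using assms(2) by auto
  then show "pres_class Y R [j a] \<in> carrier (presented Y R)" by (simp add: carrier_presented)
next
  fix a b assume ab: "a \<in> carrier H" "b \<in> carrier H"
  then have "[j a] \<in> lists Y" "[j b] \<in> lists Y" "[j (a \<otimes>\<^bsub>H\<^esub> b)] \<in> lists Y"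
    using assms(1,2) monoid.m_closed by fastforce+
  then show "pres_class Y R [j (a \<otimes>\<^bsub>H\<^esub> b)] =
      pres_class Y R [j a] \<otimes>\<^bsub>presented Y R\<^esub> pres_class Y R [j b]"
    using cong_gen.sym[OF mult[OF ab]] by (simp add: pres_class_mult pres_class_eq_iff)
qed

text \<open>The van der Waerden trick: words that are equal in a presented group act alike on any set
  on which the letters act compatibly with the relations.\<close>
lemma cong_gen_foldr_eq:
  assumes "cong_gen R u v" "u \<in> lists Y"
    and R_lists: "\<And>u v. R u v \<Longrightarrow> u \<in> lists Y \<and> v \<in> lists Y"
    and f_closed: "\<And>y x. y \<in> Y \<Longrightarrow> x \<in> \<Omega> \<Longrightarrow> f y x \<in> \<Omega>"
    and f_R: "\<And>u v x. R u v \<Longrightarrow> x \<in> \<Omega> \<Longrightarrow> foldr f u x = foldr f v x"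
    and "x \<in> \<Omega>"
  shows "foldr f u x = foldr f v x"
proof -
  have closed: "foldr f w x \<in> \<Omega>" if "w \<in> lists Y" "x \<in> \<Omega>" for w x
    using that by (induction w) (auto intro: f_closed)
  from assms(1,2,6) show ?thesis
  proof (induction arbitrary: x)
    case (base u v)
    then show ?case using f_R by blast
  next
    case (refl u)
    show ?case by simp
  next
    case (sym u v)
    then show ?case using cong_gen_lists[OF sym.hyps R_lists] by metis
  next
    case (trans u v w)
    then show ?case using cong_gen_lists[OF trans.hyps(1) R_lists] by metis
  next
    case (ctxt u v l r)
    then show ?case using closed by simp
  qed
qed

definition has_isometric_word_metrics ::
    "('a,'c) monoid_scheme \<Rightarrow> ('g,'d) monoid_scheme \<Rightarrow> ('a \<Rightarrow> 'g) \<Rightarrow> bool" where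
  "has_isometric_word_metrics H G \<iota> \<longleftrightarrow>
     (\<exists>SH SG. finite SH \<and> SH \<subseteq> carrier H \<and> generate H SH = carrier H
        \<and> (\<forall>s\<in>SH. inv\<^bsub>H\<^esub> s \<in> SH)
        \<and> finite SG \<and> SG \<subseteq> carrier G \<and> generate G SG = carrier G
        \<and> (\<forall>s\<in>SG. inv\<^bsub>G\<^esub> s \<in> SG)
        \<and> \<iota> ` SH \<subseteq> SG
        \<and> (\<forall>h1\<in>carrier H. \<forall>h2\<in>carrier H.
             word_dist H SH h1 h2 = word_dist G SG (\<iota> h1) (\<iota> h2)))"

lemma group_hom_presented_letters:
  assumes "group H" "group (presented Y R)" "j ` carrier H \<subseteq> Y"
    and "\<And>a b. a \<in> carrier H \<Longrightarrow> b \<in> carrier H \<Longrightarrow> cong_gen R [j a, j b] [j (a \<otimes>\<^bsub>H\<^esub> b)]"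
  shows "group_hom H (presented Y R) (\<lambda>h. pres_class Y R [j h])"
  using hom_presented_letters[OF group.is_monoid assms(3,4)] assms(1,2)
  by (simp add: group_hom_def group_hom_axioms_def)

lemma presented_letters_in_generate:
  assumes "group_hom H (presented Y R) (\<lambda>h. pres_class Y R [j h])"
    and "S \<subseteq> carrier H" "generate H S = carrier H" "Y0 \<subseteq> Y" "j ` S \<subseteq> Y0" "h \<in> carrier H"
  shows "pres_class Y R [j h] \<in> generate (presented Y R) ((\<lambda>y. pres_class Y R [y]) ` Y0)"
proof -
  interpret group_hom H "presented Y R" "\<lambda>h. pres_class Y R [j h]" by fact
  have "(\<lambda>h. pres_class Y R [j h]) ` generate H S \<subseteq> generate (presented Y R) ((\<lambda>y. pres_class Y R [y]) ` Y0)"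
    using assms(4,5) by (intro image_generate_subset[OF assms(2)]) (auto simp: carrier_presented)
  then show ?thesis using assms(3,6) by auto
qed

lemma presented_isometric_word_metricsI:
  assumes H: "group H"
    and iv: "\<And>y. y \<in> Y \<Longrightarrow> iv y \<in> Y \<and> cong_gen R [iv y, y] []"
    and j: "j ` carrier H \<subseteq> Y"
      "\<And>a b. a \<in> carrier H \<Longrightarrow> b \<in> carrier H \<Longrightarrow> cong_gen R [j a, j b] [j (a \<otimes>\<^bsub>H\<^esub> b)]"
    and S: "finite S" "S \<subseteq> carrier H" "\<forall>s\<in>S. inv\<^bsub>H\<^esub> s \<in> S" "generate H S = carrier H"
    and Y0: "finite Y0" "Y0 \<subseteq> Y" "j ` S \<subseteq> Y0" "\<And>y. y \<in> Y0 \<Longrightarrow> iv y \<in> Y0"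
    and gen: "\<And>y. y \<in> Y \<Longrightarrow>
      pres_class Y R [y] \<in> generate (presented Y R) ((\<lambda>y. pres_class Y R [y]) ` Y0)"
    and shorten: "\<And>w h. w \<in> lists Y0 \<Longrightarrow> h \<in> carrier H \<Longrightarrow> cong_gen R w [j h] \<Longrightarrow>
      \<exists>ss. set ss \<subseteq> S \<and> length ss \<le> length w \<and> word_prod H ss = h"
  shows "has_isometric_word_metrics H (presented Y R) (\<lambda>h. pres_class Y R [j h])"
proof -
  let ?P = "presented Y R" and ?cls = "\<lambda>y. pres_class Y R [y]" and ?\<iota> = "\<lambda>h. pres_class Y R [j h]"
  define SG where "SG = ?cls ` Y0"
  have P: "group ?P" by (rule group_presented[OF iv])
  interpret group_hom H ?P ?\<iota> by (rule group_hom_presented_letters[OF H P j])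
  have SG_carrier: "SG \<subseteq> carrier ?P" using Y0(2) by (auto simp: SG_def carrier_presented)
  have SG_inv: "\<forall>s\<in>SG. inv\<^bsub>?P\<^esub> s \<in> SG"
    using Y0(2,4) inv_pres_class[OF iv] by (auto simp: SG_def subset_iff)
  have SG_gen: "generate ?P SG = carrier ?P"
    using presented_generateI[OF P SG_carrier] gen by (simp add: SG_def)
  have \<iota>_S: "?\<iota> ` S \<subseteq> SG" using Y0(3) by (auto simp: SG_def)
  have "word_dist H S h1 h2 = word_dist ?P SG (?\<iota> h1) (?\<iota> h2)"
    if "h1 \<in> carrier H" "h2 \<in> carrier H" for h1 h2
  proof (rule word_dist_eq_if_shortening[OF S(2-4) \<iota>_S _ that])
    fix ws h assume ws: "set ws \<subseteq> SG" and h: "h \<in> carrier H" and eq: "word_prod ?P ws = ?\<iota> h"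
    have "ws \<in> lists (?cls ` Y0)" using ws by (auto simp: SG_def)
    then have "ws \<in> map ?cls ` lists Y0" by (simp only: lists_image)
    then obtain w where w: "w \<in> lists Y0" "ws = map ?cls w" by blast
    then have "pres_class Y R w = pres_class Y R [j h]"
      using eq word_prod_pres_class[of w Y R] Y0(2) by auto
    then have "cong_gen R w [j h]"
      using w(1) Y0(2) j(1) h by (subst (asm) pres_class_eq_iff) auto
    then show "\<exists>vs. set vs \<subseteq> S \<and> length vs \<le> length ws \<and> word_prod H vs = h"
      using shorten[OF w(1) h] w(2) by simp
  qed
  then show ?thesis
    unfolding has_isometric_word_metrics_def using S Y0(1) SG_carrier SG_inv SG_gen \<iota>_S
    by (intro exI[of _ S] exI[of _ SG]) (auto simp: SG_def)
qed

section \<open>Right transversals\<close>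

definition coset_rep :: "('g,'b) monoid_scheme \<Rightarrow> 'g set \<Rightarrow> 'g \<Rightarrow> 'g" where
  "coset_rep G C h = (if h \<in> C then \<one>\<^bsub>G\<^esub> else (SOME r. r \<in> C #>\<^bsub>G\<^esub> h))"

definition subgroup_part :: "('g,'b) monoid_scheme \<Rightarrow> 'g set \<Rightarrow> 'g \<Rightarrow> 'g" where
  "subgroup_part G C h = h \<otimes>\<^bsub>G\<^esub> inv\<^bsub>G\<^esub> coset_rep G C h"

locale transversal = group G + subgroup C G for C and G (structure)
begin

lemma coset_rep_in_coset:
  assumes "h \<in> carrier G" shows "\<exists>c\<in>C. coset_rep G C h = c \<otimes> h"
proof (cases "h \<in> C")
  case True
  then show ?thesis by (auto simp: coset_rep_def intro!: bexI[of _ "inv h"])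
next
  case False
  have "h \<in> C #> h" using rcos_self[OF assms] is_subgroup .
  then have "(SOME r. r \<in> C #> h) \<in> C #> h" by (rule someI)
  then show ?thesis using False by (auto simp: coset_rep_def r_coset_def)
qed

lemma coset_rep_closed: "h \<in> carrier G \<Longrightarrow> coset_rep G C h \<in> carrier G"
  using coset_rep_in_coset by fastforce

lemma subgroup_part_in: assumes "h \<in> carrier G" shows "subgroup_part G C h \<in> C"
proof -
  obtain c where c: "c \<in> C" "coset_rep G C h = c \<otimes> h" using coset_rep_in_coset[OF assms] by blast
  then have "subgroup_part G C h = inv c" using assms by (simp add: subgroup_part_def inv_mult_group m_assoc[symmetric])
  then show ?thesis using c(1) by simp
qed

lemma subgroup_part_mult_coset_rep:
  "h \<in> carrier G \<Longrightarrow> subgroup_part G C h \<otimes> coset_rep G C h = h"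
  using coset_rep_closed[of h] by (simp add: subgroup_part_def m_assoc)

lemma coset_rep_mult:
  assumes "c \<in> C" "h \<in> carrier G" shows "coset_rep G C (c \<otimes> h) = coset_rep G C h"
proof -
  have "c \<otimes> h \<in> C \<longleftrightarrow> h \<in> C"
  proof
    assume "c \<otimes> h \<in> C"
    then have "inv c \<otimes> (c \<otimes> h) \<in> C" using assms(1) by simp
    then show "h \<in> C" using assms by (simp add: m_assoc[symmetric])
  qed (use assms in simp)
  moreover have "C #> (c \<otimes> h) = (C #> c) #> h"
    using assms subset by (simp add: coset_mult_assoc)
  then have "C #> (c \<otimes> h) = C #> h"
    using coset_join2[OF _ is_subgroup assms(1)] assms(1) by auto
  ultimately show ?thesis by (simp add: coset_rep_def)
qed

lemma coset_rep_idem: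
  assumes "h \<in> carrier G" shows "coset_rep G C (coset_rep G C h) = coset_rep G C h"
proof -
  obtain c where "c \<in> C" "coset_rep G C h = c \<otimes> h" using coset_rep_in_coset[OF assms] by blast
  then show ?thesis using coset_rep_mult[OF _ assms] by simp
qed

lemma coset_rep_eq_one_iff:
  assumes "h \<in> carrier G" shows "coset_rep G C h = \<one> \<longleftrightarrow> h \<in> C"
proof
  assume "coset_rep G C h = \<one>"
  then have "subgroup_part G C h = h" using assms by (simp add: subgroup_part_def)
  then show "h \<in> C" using subgroup_part_in[OF assms] by simp
qed (simp add: coset_rep_def)

lemma coset_rep_of_mem: "h \<in> C \<Longrightarrow> coset_rep G C h = \<one>"
  by (simp add: coset_rep_def)

lemma subgroup_part_of_mem: "h \<in> C \<Longrightarrow> subgroup_part G C h = h"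
  by (simp add: subgroup_part_def coset_rep_def)

lemma factorization_unique:
  assumes "c \<in> C" "r \<in> carrier G" "coset_rep G C r = r"
  shows "coset_rep G C (c \<otimes> r) = r" "subgroup_part G C (c \<otimes> r) = c"
  using assms coset_rep_mult[OF assms(1,2)] by (simp_all add: subgroup_part_def m_assoc)

end

section \<open>Amalgamated free products\<close>

fun starts_Inl :: "('x + 'y) list \<Rightarrow> bool" where
  "starts_Inl (Inl _ # _) = True" | "starts_Inl _ = False"

fun starts_Inr :: "('x + 'y) list \<Rightarrow> bool" where
  "starts_Inr (Inr _ # _) = True" | "starts_Inr _ = False"

locale amalgam =
  fixes H :: "('a,'c) monoid_scheme" and K :: "('k,'d) monoid_scheme"
    and A :: "'a set" and B :: "'k set" and \<phi> :: "'a \<Rightarrow> 'k"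
  assumes group_H: "group H" and group_K: "group K"
    and subgroup_A: "subgroup A H" and subgroup_B: "subgroup B K"
    and iso: "\<phi> \<in> iso (H\<lparr>carrier := A\<rparr>) (K\<lparr>carrier := B\<rparr>)"
begin

sublocale H: group H by (rule group_H)
sublocale K: group K by (rule group_K)
sublocale A: transversal A H by (simp add: transversal_def group_H subgroup_A)
sublocale B: transversal B K by (simp add: transversal_def group_K subgroup_B)

definition \<psi> :: "'k \<Rightarrow> 'a" where "\<psi> = inv_into A \<phi>"

lemma phi_in_B: "a \<in> A \<Longrightarrow> \<phi> a \<in> B"
  using iso by (auto simp: iso_def hom_def)

lemma phi_closed: "a \<in> A \<Longrightarrow> \<phi> a \<in> carrier K"
  using phi_in_B B.subset by blast

lemma phi_mult: "a \<in> A \<Longrightarrow> b \<in> A \<Longrightarrow> \<phi> (a \<otimes>\<^bsub>H\<^esub> b) = \<phi> a \<otimes>\<^bsub>K\<^esub> \<phi> b"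
  using iso by (auto simp: iso_def hom_def)

lemma bij_phi: "bij_betw \<phi> A B"
  using iso by (auto simp: iso_def)

lemma psi_in_A: "b \<in> B \<Longrightarrow> \<psi> b \<in> A"
  using bij_phi unfolding \<psi>_def by (metis bij_betw_def inv_into_into)

lemma phi_psi: "b \<in> B \<Longrightarrow> \<phi> (\<psi> b) = b"
  using bij_phi unfolding \<psi>_def by (metis bij_betw_def f_inv_into_f)

lemma psi_phi: "a \<in> A \<Longrightarrow> \<psi> (\<phi> a) = a"
  using bij_phi unfolding \<psi>_def by (metis bij_betw_def inv_into_f_f)

text \<open>A normal form \<open>(a, [r\<^sub>1, \<dots>, r\<^sub>n])\<close> stands for \<open>a r\<^sub>1 \<cdots> r\<^sub>n\<close>: \<open>a \<in> A\<close>,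
  and the \<open>r\<^sub>i\<close> are nontrivial coset representatives, alternately from \<open>H\<close> and \<open>K\<close>.\<close>
fun reduced :: "('a + 'k) list \<Rightarrow> bool" where
  "reduced [] = True"
| "reduced (Inl r # l) =
    (r \<in> carrier H \<and> coset_rep H A r = r \<and> r \<noteq> \<one>\<^bsub>H\<^esub> \<and> \<not> starts_Inl l \<and> reduced l)"
| "reduced (Inr r # l) =
    (r \<in> carrier K \<and> coset_rep K B r = r \<and> r \<noteq> \<one>\<^bsub>K\<^esub> \<and> \<not> starts_Inr l \<and> reduced l)"

definition normal_forms :: "('a \<times> ('a + 'k) list) set" where
  "normal_forms = A \<times> Collect reduced"

text \<open>An element of \<open>H\<close> acts by multiplying the leading \<open>H\<close>-syllable, merged with the
  \<open>A\<close>-part by \<open>absorb_H\<close>, and splitting the product again by \<open>push_H\<close>; dually for \<open>K\<close>.\<close>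
definition absorb_H :: "'a \<times> ('a + 'k) list \<Rightarrow> 'a \<times> ('a + 'k) list" where
  "absorb_H x = (case snd x of Inl r # l \<Rightarrow> (fst x \<otimes>\<^bsub>H\<^esub> r, l) | _ \<Rightarrow> x)"

definition push_H :: "'a \<Rightarrow> ('a + 'k) list \<Rightarrow> 'a \<times> ('a + 'k) list" where
  "push_H p l = (subgroup_part H A p,
     if coset_rep H A p = \<one>\<^bsub>H\<^esub> then l else Inl (coset_rep H A p) # l)"

definition act_H :: "'a \<Rightarrow> 'a \<times> ('a + 'k) list \<Rightarrow> 'a \<times> ('a + 'k) list" where
  "act_H h x = push_H (h \<otimes>\<^bsub>H\<^esub> fst (absorb_H x)) (snd (absorb_H x))"

definition absorb_K :: "'a \<times> ('a + 'k) list \<Rightarrow> 'k \<times> ('a + 'k) list" where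
  "absorb_K x = (case snd x of Inr r # l \<Rightarrow> (\<phi> (fst x) \<otimes>\<^bsub>K\<^esub> r, l) | _ \<Rightarrow> (\<phi> (fst x), snd x))"

definition push_K :: "'k \<Rightarrow> ('a + 'k) list \<Rightarrow> 'a \<times> ('a + 'k) list" where
  "push_K q l = (\<psi> (subgroup_part K B q),
     if coset_rep K B q = \<one>\<^bsub>K\<^esub> then l else Inr (coset_rep K B q) # l)"

definition act_K :: "'k \<Rightarrow> 'a \<times> ('a + 'k) list \<Rightarrow> 'a \<times> ('a + 'k) list" where
  "act_K k x = push_K (k \<otimes>\<^bsub>K\<^esub> fst (absorb_K x)) (snd (absorb_K x))"

fun act :: "'a + 'k \<Rightarrow> 'a \<times> ('a + 'k) list \<Rightarrow> 'a \<times> ('a + 'k) list" where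
  "act (Inl h) = act_H h" | "act (Inr k) = act_K k"

lemma normal_forms_cases:
  assumes "x \<in> normal_forms"
  obtains (Nil) a where "x = (a, [])" "a \<in> A"
  | (Inl) a r l where "x = (a, Inl r # l)" "a \<in> A" "r \<in> carrier H" "coset_rep H A r = r"
      "r \<noteq> \<one>\<^bsub>H\<^esub>" "\<not> starts_Inl l" "reduced l"
  | (Inr) a r l where "x = (a, Inr r # l)" "a \<in> A" "r \<in> carrier K" "coset_rep K B r = r"
      "r \<noteq> \<one>\<^bsub>K\<^esub>" "\<not> starts_Inr l" "reduced l"
proof -
  obtain a l where x: "x = (a, l)" by fastforce
  show thesis
  proof (cases l)
    case Nil
    then show ?thesis using that x assms by (auto simp: normal_forms_def)
  next
    case (Cons y l')
    then show ?thesis using that x assms by (cases y) (auto simp: normal_forms_def)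
  qed
qed

lemma absorb_H_normal_form:
  assumes "x \<in> normal_forms"
  shows "fst (absorb_H x) \<in> carrier H" "reduced (snd (absorb_H x))" "\<not> starts_Inl (snd (absorb_H x))"
  using assms by (cases rule: normal_forms_cases; auto simp: absorb_H_def)+

lemma push_H_in_normal_forms:
  "p \<in> carrier H \<Longrightarrow> reduced l \<Longrightarrow> \<not> starts_Inl l \<Longrightarrow> push_H p l \<in> normal_forms"
  using A.subgroup_part_in A.coset_rep_idem A.coset_rep_closed
  by (auto simp: push_H_def normal_forms_def)

lemma absorb_push_H:
  assumes "p \<in> carrier H" "\<not> starts_Inl l"
  shows "absorb_H (push_H p l) = (p, l)"
proof (cases "coset_rep H A p = \<one>\<^bsub>H\<^esub>")
  case True
  then have "p \<in> A" using A.coset_rep_eq_one_iff[OF assms(1)] by simp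
  then show ?thesis using True assms A.subgroup_part_of_mem
    by (cases l rule: starts_Inl.cases) (auto simp: push_H_def absorb_H_def)
next
  case False
  then show ?thesis
    using A.subgroup_part_mult_coset_rep[OF assms(1)] by (simp add: push_H_def absorb_H_def)
qed

lemma push_absorb_H:
  assumes "x \<in> normal_forms"
  shows "push_H (fst (absorb_H x)) (snd (absorb_H x)) = x"
  using assms
proof (cases rule: normal_forms_cases)
  case (Inl a r l)
  then show ?thesis using A.factorization_unique[of a r] by (simp add: absorb_H_def push_H_def)
qed (simp_all add: absorb_H_def push_H_def A.coset_rep_of_mem A.subgroup_part_of_mem)

lemma act_H_closed: "h \<in> carrier H \<Longrightarrow> x \<in> normal_forms \<Longrightarrow> act_H h x \<in> normal_forms"
  unfolding act_H_def using absorb_H_normal_form push_H_in_normal_forms by simp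

lemma act_H_mult:
  assumes "h1 \<in> carrier H" "h2 \<in> carrier H" "x \<in> normal_forms"
  shows "act_H h1 (act_H h2 x) = act_H (h1 \<otimes>\<^bsub>H\<^esub> h2) x"
  using assms absorb_H_normal_form[OF assms(3)]
  by (simp add: act_H_def absorb_push_H H.m_assoc)

lemma act_H_one: "x \<in> normal_forms \<Longrightarrow> act_H \<one>\<^bsub>H\<^esub> x = x"
  using absorb_H_normal_form push_absorb_H by (simp add: act_H_def)

lemma absorb_K_normal_form:
  assumes "x \<in> normal_forms"
  shows "fst (absorb_K x) \<in> carrier K" "reduced (snd (absorb_K x))" "\<not> starts_Inr (snd (absorb_K x))"
  using assms by (cases rule: normal_forms_cases; auto simp: absorb_K_def phi_closed)+

lemma push_K_in_normal_forms:
  "q \<in> carrier K \<Longrightarrow> reduced l \<Longrightarrow> \<not> starts_Inr l \<Longrightarrow> push_K q l \<in> normal_forms"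
  using psi_in_A[OF B.subgroup_part_in] B.coset_rep_idem B.coset_rep_closed
  by (auto simp: push_K_def normal_forms_def)

lemma absorb_push_K:
  assumes "q \<in> carrier K" "\<not> starts_Inr l"
  shows "absorb_K (push_K q l) = (q, l)"
proof (cases "coset_rep K B q = \<one>\<^bsub>K\<^esub>")
  case True
  then have "q \<in> B" using B.coset_rep_eq_one_iff[OF assms(1)] by simp
  then show ?thesis using True assms B.subgroup_part_of_mem phi_psi
    by (cases l rule: starts_Inr.cases) (auto simp: push_K_def absorb_K_def)
next
  case False
  then show ?thesis
    using B.subgroup_part_mult_coset_rep[OF assms(1)] phi_psi[OF B.subgroup_part_in[OF assms(1)]]
    by (simp add: push_K_def absorb_K_def)
qed

lemma push_absorb_K:
  assumes "x \<in> normal_forms"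
  shows "push_K (fst (absorb_K x)) (snd (absorb_K x)) = x"
  using assms
proof (cases rule: normal_forms_cases)
  case (Inr a r l)
  then show ?thesis
    using B.factorization_unique[of "\<phi> a" r] phi_in_B psi_phi by (simp add: absorb_K_def push_K_def)
qed (simp_all add: absorb_K_def push_K_def B.coset_rep_of_mem B.subgroup_part_of_mem phi_in_B psi_phi)

lemma act_K_closed: "k \<in> carrier K \<Longrightarrow> x \<in> normal_forms \<Longrightarrow> act_K k x \<in> normal_forms"
  unfolding act_K_def using absorb_K_normal_form push_K_in_normal_forms by simp

lemma act_K_mult:
  assumes "k1 \<in> carrier K" "k2 \<in> carrier K" "x \<in> normal_forms"
  shows "act_K k1 (act_K k2 x) = act_K (k1 \<otimes>\<^bsub>K\<^esub> k2) x"
  using assms absorb_K_normal_form[OF assms(3)]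
  by (simp add: act_K_def absorb_push_K K.m_assoc)

lemma act_K_one: "x \<in> normal_forms \<Longrightarrow> act_K \<one>\<^bsub>K\<^esub> x = x"
  using absorb_K_normal_form push_absorb_K by (simp add: act_K_def)

lemma act_H_eq_act_K:
  assumes "a0 \<in> A" "x \<in> normal_forms"
  shows "act_H a0 x = act_K (\<phi> a0) x"
  using assms(2)
proof (cases rule: normal_forms_cases)
  case (Nil a)
  have "a0 \<otimes>\<^bsub>H\<^esub> a \<in> A" using assms(1) Nil by simp
  then show ?thesis
    using Nil phi_mult[OF assms(1) Nil(2), symmetric] phi_in_B psi_phi
    by (simp add: act_H_def act_K_def absorb_H_def absorb_K_def push_H_def push_K_def
        A.coset_rep_of_mem A.subgroup_part_of_mem B.coset_rep_of_mem B.subgroup_part_of_mem)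
next
  case (Inl a r l)
  have aa: "a0 \<otimes>\<^bsub>H\<^esub> a \<in> A" using assms(1) Inl by simp
  have "a0 \<otimes>\<^bsub>H\<^esub> (a \<otimes>\<^bsub>H\<^esub> r) = (a0 \<otimes>\<^bsub>H\<^esub> a) \<otimes>\<^bsub>H\<^esub> r"
    using Inl assms A.subset by (simp add: H.m_assoc subset_iff)
  then show ?thesis
    using Inl aa phi_mult[OF assms(1) Inl(2)] A.factorization_unique[OF aa Inl(3,4)]
      phi_in_B[OF aa] psi_phi[OF aa]
    by (simp add: act_H_def act_K_def absorb_H_def absorb_K_def push_H_def push_K_def
        B.coset_rep_of_mem B.subgroup_part_of_mem)
next
  case (Inr a r l)
  have aa: "a0 \<otimes>\<^bsub>H\<^esub> a \<in> A" using assms(1) Inr by simp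
  have "\<phi> a0 \<otimes>\<^bsub>K\<^esub> (\<phi> a \<otimes>\<^bsub>K\<^esub> r) = \<phi> (a0 \<otimes>\<^bsub>H\<^esub> a) \<otimes>\<^bsub>K\<^esub> r"
    using Inr assms phi_closed phi_mult by (simp add: K.m_assoc)
  then show ?thesis
    using Inr aa B.factorization_unique[OF phi_in_B[OF aa] Inr(3,4)] psi_phi[OF aa]
    by (simp add: act_H_def act_K_def absorb_H_def absorb_K_def push_H_def push_K_def
        A.coset_rep_of_mem A.subgroup_part_of_mem)
qed

end

context amalgam
begin

lemma amalg_rel_lists:
  "amalg_rel H K A \<phi> u v \<Longrightarrow> u \<in> lists (amalg_gens H K) \<and> v \<in> lists (amalg_gens H K)"
  by (auto simp: amalg_rel_def amalg_gens_def phi_closed)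

lemma cong_amalg_rel_Inl:
  "a \<in> carrier H \<Longrightarrow> b \<in> carrier H \<Longrightarrow>
    cong_gen (amalg_rel H K A \<phi>) [Inl a, Inl b] [Inl (a \<otimes>\<^bsub>H\<^esub> b)]"
  by (rule cong_gen.base) (auto simp: amalg_rel_def)

lemma cong_amalg_rel_Inr:
  "a \<in> carrier K \<Longrightarrow> b \<in> carrier K \<Longrightarrow>
    cong_gen (amalg_rel H K A \<phi>) [Inr a, Inr b] [Inr (a \<otimes>\<^bsub>K\<^esub> b)]"
  by (rule cong_gen.base) (auto simp: amalg_rel_def)

fun inv_letter :: "'a + 'k \<Rightarrow> 'a + 'k" where
  "inv_letter (Inl h) = Inl (inv\<^bsub>H\<^esub> h)" | "inv_letter (Inr k) = Inr (inv\<^bsub>K\<^esub> k)"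

lemma inv_letter:
  assumes "y \<in> amalg_gens H K"
  shows "inv_letter y \<in> amalg_gens H K \<and> cong_gen (amalg_rel H K A \<phi>) [inv_letter y, y] []"
proof (cases y)
  case (Inl h)
  then have h: "h \<in> carrier H" using assms by (auto simp: amalg_gens_def)
  have "cong_gen (amalg_rel H K A \<phi>) [Inl \<one>\<^bsub>H\<^esub>] []" by (rule cong_gen.base) (simp add: amalg_rel_def)
  then show ?thesis
    using Inl h cong_amalg_rel_Inl[of "inv\<^bsub>H\<^esub> h" h]
    by (auto simp: amalg_gens_def intro: cong_gen.trans)
next
  case (Inr k)
  then have k: "k \<in> carrier K" using assms by (auto simp: amalg_gens_def)
  have "cong_gen (amalg_rel H K A \<phi>) [Inr \<one>\<^bsub>K\<^esub>] []" by (rule cong_gen.base) (simp add: amalg_rel_def)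
  then show ?thesis
    using Inr k cong_amalg_rel_Inr[of "inv\<^bsub>K\<^esub> k" k]
    by (auto simp: amalg_gens_def intro: cong_gen.trans)
qed

lemma act_closed: "y \<in> amalg_gens H K \<Longrightarrow> x \<in> normal_forms \<Longrightarrow> act y x \<in> normal_forms"
  by (auto simp: amalg_gens_def act_H_closed act_K_closed)

lemma foldr_act_closed:
  "w \<in> lists (amalg_gens H K) \<Longrightarrow> x \<in> normal_forms \<Longrightarrow> foldr act w x \<in> normal_forms"
  by (induction w) (auto simp: act_closed)

lemma act_amalg_rel:
  "amalg_rel H K A \<phi> u v \<Longrightarrow> x \<in> normal_forms \<Longrightarrow> foldr act u x = foldr act v x"
  unfolding amalg_rel_def
  by (auto simp: act_H_mult act_K_mult act_H_one act_K_one intro: act_H_eq_act_K)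

lemma foldr_act_map_Inl:
  "set hs \<subseteq> carrier H \<Longrightarrow> x \<in> normal_forms \<Longrightarrow>
    foldr act (map Inl hs) x = act_H (word_prod H hs) x"
  by (induction hs) (auto simp: act_H_one act_H_mult H.word_prod_closed)

lemma act_H_new_syllable:
  assumes "x \<in> normal_forms" "\<not> starts_Inl (snd x)" "h \<in> carrier H" "h \<notin> A"
  shows "\<exists>r. snd (act_H h x) = Inl r # snd x"
proof -
  have x: "absorb_H x = x" using assms(2) by (cases "snd x" rule: starts_Inl.cases) (auto simp: absorb_H_def)
  have a: "fst x \<in> A" using assms(1) by (auto simp: normal_forms_def)
  have "h \<otimes>\<^bsub>H\<^esub> fst x \<notin> A"
  proof
    assume "h \<otimes>\<^bsub>H\<^esub> fst x \<in> A"
    then have "h \<otimes>\<^bsub>H\<^esub> fst x \<otimes>\<^bsub>H\<^esub> inv\<^bsub>H\<^esub> fst x \<in> A" using a by simp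
    then show False using assms(3,4) a A.subset by (auto simp: H.m_assoc)
  qed
  then have "coset_rep H A (h \<otimes>\<^bsub>H\<^esub> fst x) \<noteq> \<one>\<^bsub>H\<^esub>"
    using A.coset_rep_eq_one_iff assms(3) a A.subset by auto
  then show ?thesis by (simp add: act_H_def x push_H_def)
qed

lemma act_K_new_syllable:
  assumes "x \<in> normal_forms" "\<not> starts_Inr (snd x)" "k \<in> carrier K" "k \<notin> B"
  shows "\<exists>r. snd (act_K k x) = Inr r # snd x"
proof -
  have x: "absorb_K x = (\<phi> (fst x), snd x)"
    using assms(2) by (cases "snd x" rule: starts_Inr.cases) (auto simp: absorb_K_def)
  have a: "\<phi> (fst x) \<in> B" using assms(1) phi_in_B by (auto simp: normal_forms_def)
  have "k \<otimes>\<^bsub>K\<^esub> \<phi> (fst x) \<notin> B"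
  proof
    assume "k \<otimes>\<^bsub>K\<^esub> \<phi> (fst x) \<in> B"
    then have "k \<otimes>\<^bsub>K\<^esub> \<phi> (fst x) \<otimes>\<^bsub>K\<^esub> inv\<^bsub>K\<^esub> \<phi> (fst x) \<in> B" using a by simp
    then show False using assms(3,4) a B.subset by (auto simp: K.m_assoc)
  qed
  then have "coset_rep K B (k \<otimes>\<^bsub>K\<^esub> \<phi> (fst x)) \<noteq> \<one>\<^bsub>K\<^esub>"
    using B.coset_rep_eq_one_iff assms(3) a B.subset by auto
  then show ?thesis by (simp add: act_K_def x push_K_def)
qed

end

locale amalgam_gens = amalgam H K A B \<phi>
  for H :: "('a,'c) monoid_scheme" and K :: "('k,'d) monoid_scheme" and A B \<phi> +
  fixes SH :: "'a set"
  assumes SH_subset: "SH \<subseteq> carrier H" and A_subset_SH: "A \<subseteq> SH"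
begin

definition letters :: "('a + 'k) set" where
  "letters = Inl ` SH \<union> Inr ` carrier K"

definition base_point :: "'a \<times> ('a + 'k) list" where
  "base_point = (\<one>\<^bsub>H\<^esub>, [])"

text \<open>Letters from \<open>K\<close> count twice, so that rewriting a letter from \<open>B\<close> as one from \<open>A\<close>
  makes progress.\<close>
definition weight :: "('a + 'k) list \<Rightarrow> nat" where
  "weight w = length w + length (filter (\<lambda>y. \<not> isl y) w)"

definition shortenable :: "('a + 'k) list \<Rightarrow> bool" where
  "shortenable w \<longleftrightarrow> (\<exists>w' \<in> lists letters. weight w' < weight w \<and> length w' \<le> length w
      \<and> (\<forall>x\<in>normal_forms. foldr act w' x = foldr act w x))"

lemma letters_subset: "letters \<subseteq> amalg_gens H K"
  using SH_subset by (auto simp: letters_def amalg_gens_def)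

lemma base_point_in_normal_forms: "base_point \<in> normal_forms"
  by (simp add: base_point_def normal_forms_def)

lemma act_H_base_point: "h \<in> carrier H \<Longrightarrow> act_H h base_point = push_H h []"
  by (simp add: act_H_def absorb_H_def base_point_def)

lemma shortenable_append_left:
  assumes "shortenable v" "u \<in> lists letters" shows "shortenable (u @ v)"
proof -
  obtain v' where "v' \<in> lists letters" "weight v' < weight v" "length v' \<le> length v"
      "\<forall>x\<in>normal_forms. foldr act v' x = foldr act v x"
    using assms(1) by (auto simp: shortenable_def)
  then show ?thesis
    unfolding shortenable_def using assms(2) by (intro bexI[of _ "u @ v'"]) (auto simp: weight_def)
qed

lemma shortenable_append_right:
  assumes "shortenable u" "v \<in> lists letters" shows "shortenable (u @ v)"
proof -
  obtain u' where "u' \<in> lists letters" "weight u' < weight u" "length u' \<le> length u"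
      "\<forall>x\<in>normal_forms. foldr act u' x = foldr act u x"
    using assms(1) by (auto simp: shortenable_def)
  moreover have "foldr act v x \<in> normal_forms" if "x \<in> normal_forms" for x
    using foldr_act_closed assms(2) letters_subset that by blast
  ultimately show ?thesis
    unfolding shortenable_def using assms(2) by (intro bexI[of _ "u' @ v"]) (auto simp: weight_def)
qed

end

context amalgam_gens
begin

lemma foldr_letters_closed: "w \<in> lists letters \<Longrightarrow> x \<in> normal_forms \<Longrightarrow> foldr act w x \<in> normal_forms"
  using foldr_act_closed lists_mono[OF letters_subset] by blast

lemma map_Inl_in_letters: "set hs \<subseteq> SH \<Longrightarrow> map Inl hs \<in> lists letters"
  by (induction hs) (auto simp: letters_def)

lemma foldr_act_Inr_Inl:
  assumes "k \<in> carrier K" "set hs \<subseteq> carrier H" "v \<in> lists letters" "x \<in> normal_forms"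
  shows "foldr act (Inr k # map Inl hs @ v) x = act_K k (act_H (word_prod H hs) (foldr act v x))"
proof -
  have "foldr act v x \<in> normal_forms" using foldr_letters_closed assms(3,4) by blast
  then show ?thesis using foldr_act_map_Inl[OF assms(2)] by simp
qed

lemma shortenable_or_K_syllable:
  "v \<in> lists letters \<Longrightarrow> v = Inr k # rest \<Longrightarrow>
    shortenable v \<or> (\<exists>a r l. foldr act v base_point = (a, Inr r # l))"
proof (induction "length v" arbitrary: v k rest rule: less_induct)
  case less
  have k: "k \<in> carrier K" and rest: "rest \<in> lists letters"
    using less.prems by (auto simp: letters_def)
  obtain hs v' where hv: "rest = map Inl hs @ v'" "set hs \<subseteq> SH"
      "v' = [] \<or> (\<exists>k' v''. v' = Inr k' # v'' \<and> k' \<in> carrier K \<and> v'' \<in> lists letters)"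
    using split_Inl_prefix[OF rest[unfolded letters_def]] unfolding letters_def by blast
  have hs: "set hs \<subseteq> carrier H" using hv(2) SH_subset by auto
  define p where "p = word_prod H hs"
  have p: "p \<in> carrier H" using H.word_prod_closed[OF hs] by (simp add: p_def)
  have v': "v' \<in> lists letters" using hv(3) by (auto simp: letters_def)
  define y where "y = foldr act v' base_point"
  have y: "y \<in> normal_forms"
    using foldr_letters_closed[OF v' base_point_in_normal_forms] by (simp add: y_def)
  have K_syllable: "\<exists>a r l. foldr act v base_point = (a, Inr r # l)"
    if "k \<notin> B" "\<not> starts_Inr (snd (act_H p y))"
    using act_K_new_syllable[OF act_H_closed[OF p y] that(2) k that(1)]
      foldr_act_Inr_Inl[OF k hs v' base_point_in_normal_forms] less.prems(2) hv(1)
    by (metis append_Cons p_def prod.collapse y_def)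
  show ?case
  proof (cases "k \<in> B")
    case True
    have "shortenable v" unfolding shortenable_def
    proof (intro bexI[of _ "Inl (\<psi> k) # rest"] conjI ballI)
      show "Inl (\<psi> k) # rest \<in> lists letters"
        using rest psi_in_A[OF True] A_subset_SH by (auto simp: letters_def)
      show "weight (Inl (\<psi> k) # rest) < weight v" by (simp add: less.prems(2) weight_def)
      show "length (Inl (\<psi> k) # rest) \<le> length v" by (simp add: less.prems(2))
      fix x assume "x \<in> normal_forms"
      then show "foldr act (Inl (\<psi> k) # rest) x = foldr act v x"
        using act_H_eq_act_K[OF psi_in_A[OF True]] phi_psi[OF True] foldr_letters_closed[OF rest]
          less.prems(2) by auto
    qed
    then show ?thesis ..
  next
    case kB: False
    consider "v' = []" | k' v'' where "v' = Inr k' # v''" "k' \<in> carrier K" "v'' \<in> lists letters"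
      using hv(3) by blast
    then show ?thesis
    proof cases
      case 1
      then have "\<not> starts_Inr (snd (act_H p y))"
        using p by (simp add: y_def act_H_base_point push_H_def)
      then show ?thesis using K_syllable kB by blast
    next
      case (2 k' v'')
      show ?thesis
      proof (cases "p \<in> A")
        case True
        let ?seg = "Inr k # map Inl hs @ [Inr k']"
        have "shortenable ?seg" unfolding shortenable_def
        proof (intro bexI[of _ "[Inr (k \<otimes>\<^bsub>K\<^esub> \<phi> p \<otimes>\<^bsub>K\<^esub> k')]"] conjI ballI)
          show "[Inr (k \<otimes>\<^bsub>K\<^esub> \<phi> p \<otimes>\<^bsub>K\<^esub> k')] \<in> lists letters"
            using k 2(2) phi_closed[OF True] by (auto simp: letters_def)
          show "weight [Inr (k \<otimes>\<^bsub>K\<^esub> \<phi> p \<otimes>\<^bsub>K\<^esub> k')] < weight ?seg" by (simp add: weight_def)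
          show "length [Inr (k \<otimes>\<^bsub>K\<^esub> \<phi> p \<otimes>\<^bsub>K\<^esub> k')] \<le> length ?seg" by simp
          fix x assume x: "x \<in> normal_forms"
          have x1: "act_K k' x \<in> normal_forms" using act_K_closed[OF 2(2) x] .
          have "foldr act ?seg x = act_K k (act_H p (act_K k' x))"
            using foldr_act_map_Inl[OF hs x1] by (simp add: p_def)
          also have "\<dots> = act_K k (act_K (\<phi> p) (act_K k' x))"
            using act_H_eq_act_K[OF True x1] by simp
          also have "\<dots> = act_K (k \<otimes>\<^bsub>K\<^esub> \<phi> p \<otimes>\<^bsub>K\<^esub> k') x"
            using act_K_mult k phi_closed[OF True] 2(2) x x1 by (simp add: K.m_assoc)
          finally show "foldr act [Inr (k \<otimes>\<^bsub>K\<^esub> \<phi> p \<otimes>\<^bsub>K\<^esub> k')] x = foldr act ?seg x"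
            by simp
        qed
        then have "shortenable (?seg @ v'')" using shortenable_append_right 2(3) by blast
        then show ?thesis using less.prems(2) hv(1) 2(1) by simp
      next
        case False
        have "length v' < length v" using less.prems(2) hv(1) by simp
        then have "shortenable v' \<or> (\<exists>a r l. y = (a, Inr r # l))"
          using less.hyps v' 2(1) by (simp add: y_def)
        then show ?thesis
        proof
          assume "shortenable v'"
          moreover have "Inr k # map Inl hs \<in> lists letters"
            using map_Inl_in_letters[OF hv(2)] k by (simp add: letters_def)
          ultimately have "shortenable ((Inr k # map Inl hs) @ v')"
            by (rule shortenable_append_left)
          then show ?thesis using less.prems(2) hv(1) by simp
        next
          assume "\<exists>a r l. y = (a, Inr r # l)"
          then obtain a r l where "y = (a, Inr r # l)" by blast
          then have "\<not> starts_Inr (snd (act_H p y))"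
            using act_H_new_syllable[OF y _ p False] by auto
          then show ?thesis using K_syllable kB by blast
        qed
      qed
    qed
  qed
qed

lemma shorten_to_H_word:
  "w \<in> lists letters \<Longrightarrow> h \<in> carrier H \<Longrightarrow> foldr act w base_point = push_H h [] \<Longrightarrow>
    \<exists>ss. set ss \<subseteq> SH \<and> length ss \<le> length w \<and> word_prod H ss = h"
proof (induction "weight w" arbitrary: w rule: less_induct)
  case less
  obtain hs v where hv: "w = map Inl hs @ v" "set hs \<subseteq> SH"
      "v = [] \<or> (\<exists>k v'. v = Inr k # v' \<and> k \<in> carrier K \<and> v' \<in> lists letters)"
    using split_Inl_prefix[OF less.prems(1)[unfolded letters_def]] unfolding letters_def by blast
  have hs: "set hs \<subseteq> carrier H" using hv(2) SH_subset by auto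
  have v: "v \<in> lists letters" using hv(3) by (auto simp: letters_def)
  have "foldr act v base_point \<in> normal_forms"
    using foldr_letters_closed[OF v base_point_in_normal_forms] .
  then have fold_w: "foldr act w base_point = act_H (word_prod H hs) (foldr act v base_point)"
    using hv(1) foldr_act_map_Inl[OF hs] by simp
  consider "v = []" | k v' where "v = Inr k # v'" using hv(3) by blast
  then show ?case
  proof cases
    case 1
    then have "push_H (word_prod H hs) [] = push_H h []"
      using fold_w less.prems(3) act_H_base_point H.word_prod_closed[OF hs] by (simp add: base_point_def)
    then have "absorb_H (push_H (word_prod H hs) []) = absorb_H (push_H h [])" by simp
    then have "word_prod H hs = h"
      using absorb_push_H H.word_prod_closed[OF hs] less.prems(2) by simp
    then show ?thesis using hv(1,2) 1 by auto
  next
    case (2 k v')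
    from shortenable_or_K_syllable[OF v 2] show ?thesis
    proof
      assume "shortenable v"
      moreover have "map Inl hs \<in> lists letters" using map_Inl_in_letters hv(2) .
      ultimately have "shortenable w" using shortenable_append_left hv(1) by simp
      then obtain w' where w': "w' \<in> lists letters" "weight w' < weight w" "length w' \<le> length w"
          "\<forall>x\<in>normal_forms. foldr act w' x = foldr act w x"
        unfolding shortenable_def by blast
      then have "foldr act w' base_point = push_H h []"
        using less.prems(3) base_point_in_normal_forms by simp
      then show ?thesis using less.hyps[OF w'(2) w'(1) less.prems(2)] w'(3) by fastforce
    next
      assume "\<exists>a r l. foldr act v base_point = (a, Inr r # l)"
      then obtain a r l where "foldr act v base_point = (a, Inr r # l)" by blast
      then have "Inr r \<in> set (snd (foldr act w base_point))"
        using fold_w by (simp add: act_H_def absorb_H_def push_H_def)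
      moreover have "set (snd (push_H h [])) \<subseteq> range Inl" by (simp add: push_H_def)
      ultimately show ?thesis using less.prems(3) by auto
    qed
  qed
qed

lemma shorten_amalg_word:
  assumes "w \<in> lists letters" "h \<in> carrier H" "cong_gen (amalg_rel H K A \<phi>) w [Inl h]"
  shows "\<exists>ss. set ss \<subseteq> SH \<and> length ss \<le> length w \<and> word_prod H ss = h"
proof -
  have "foldr act w base_point = foldr act [Inl h] base_point"
    using cong_gen_foldr_eq[OF assms(3) _ amalg_rel_lists act_closed act_amalg_rel
        base_point_in_normal_forms] assms(1) letters_subset by blast
  then show ?thesis using shorten_to_H_word assms(1,2) act_H_base_point by simp
qed

end

lemma (in amalgam) amalg_has_isometric_word_metrics:
  assumes "finitely_generated H" "finitely_generated K" "finite A"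
  shows "has_isometric_word_metrics H (amalg H K A \<phi>) (amalg_incl H K A \<phi>)"
proof -
  obtain SH where SH: "finite SH" "SH \<subseteq> carrier H" "\<forall>s\<in>SH. inv\<^bsub>H\<^esub> s \<in> SH"
      "generate H SH = carrier H" "A \<subseteq> SH"
    using H.finite_symmetric_generating_set[OF assms(1,3) A.subset] by blast
  obtain SK where SK: "finite SK" "SK \<subseteq> carrier K" "\<forall>s\<in>SK. inv\<^bsub>K\<^esub> s \<in> SK"
      "generate K SK = carrier K"
    by (rule K.finite_symmetric_generating_set[OF assms(2) finite.emptyI empty_subsetI])
  interpret amalgam_gens H K A B \<phi> SH using SH by unfold_locales auto
  let ?Y = "amalg_gens H K" and ?R = "amalg_rel H K A \<phi>"
  define Y0 where "Y0 = Inl ` SH \<union> Inr ` SK"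
  have Y0: "Y0 \<subseteq> ?Y" using SH SK by (auto simp: Y0_def amalg_gens_def)
  have SH_Y0: "Inl ` SH \<subseteq> Y0" and SK_Y0: "Inr ` SK \<subseteq> Y0" by (auto simp: Y0_def)
  have P: "group (presented ?Y ?R)" by (rule group_presented[OF inv_letter])
  have hom_H: "group_hom H (presented ?Y ?R) (\<lambda>h. pres_class ?Y ?R [Inl h])"
    by (rule group_hom_presented_letters[OF group_H P _ cong_amalg_rel_Inl]) (auto simp: amalg_gens_def)
  have hom_K: "group_hom K (presented ?Y ?R) (\<lambda>k. pres_class ?Y ?R [Inr k])"
    by (rule group_hom_presented_letters[OF group_K P _ cong_amalg_rel_Inr]) (auto simp: amalg_gens_def)
  have "has_isometric_word_metrics H (presented ?Y ?R) (\<lambda>h. pres_class ?Y ?R [Inl h])"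
  proof (rule presented_isometric_word_metricsI[OF group_H inv_letter _ cong_amalg_rel_Inl SH(1-4)])
    show "Inl ` carrier H \<subseteq> ?Y" by (auto simp: amalg_gens_def)
    show "finite Y0" using SH SK by (simp add: Y0_def)
    show "Inl ` SH \<subseteq> Y0" by (fact SH_Y0)
    show "Y0 \<subseteq> ?Y" by (fact Y0)
    show "inv_letter y \<in> Y0" if "y \<in> Y0" for y using that SH(3) SK(3) by (auto simp: Y0_def)
    show "pres_class ?Y ?R [y] \<in> generate (presented ?Y ?R) ((\<lambda>y. pres_class ?Y ?R [y]) ` Y0)"
      if "y \<in> ?Y" for y
      using that presented_letters_in_generate[OF hom_H SH(2,4) Y0 SH_Y0]
        presented_letters_in_generate[OF hom_K SK(2,4) Y0 SK_Y0]
      by (auto simp: amalg_gens_def)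
    show "\<exists>ss. set ss \<subseteq> SH \<and> length ss \<le> length w \<and> word_prod H ss = h"
      if "w \<in> lists Y0" "h \<in> carrier H" "cong_gen ?R w [Inl h]" for w h
    proof (rule shorten_amalg_word[OF _ that(2,3)])
      have "Y0 \<subseteq> letters" using SK(2) by (auto simp: Y0_def letters_def)
      then show "w \<in> lists letters" using that(1) lists_mono by blast
    qed
  qed
  then show ?thesis by (simp add: amalg_def amalg_incl_def[abs_def])
qed

section \<open>HNN extensions\<close>

fun starts_with :: "bool \<Rightarrow> (bool \<times> 'x) list \<Rightarrow> bool" where
  "starts_with e ((e', _) # _) = (e' = e)" | "starts_with e [] = False"

locale hnn_extension =
  fixes H :: "('a,'c) monoid_scheme" and A :: "'a set" and B :: "'a set" and \<phi> :: "'a \<Rightarrow> 'a"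
  assumes group_H: "group H" and subgroup_A: "subgroup A H" and subgroup_B: "subgroup B H"
    and iso: "\<phi> \<in> iso (H\<lparr>carrier := A\<rparr>) (H\<lparr>carrier := B\<rparr>)"
begin

sublocale H: group H by (rule group_H)

definition \<psi> :: "'a \<Rightarrow> 'a" where "\<psi> = inv_into A \<phi>"

text \<open>The stable letter \<open>t\<close> is \<open>Inr True\<close> and \<open>t\<inverse>\<close> is \<open>Inr False\<close>; since
  \<open>t\<inverse> a = \<phi> a t\<inverse>\<close> for \<open>a \<in> A\<close> and \<open>t b = \<psi> b t\<close> for \<open>b \<in> B\<close>, the letter \<open>Inr e\<close>
  moves \<open>assoc_sub e\<close> across itself via \<open>twist e\<close>.\<close>
definition assoc_sub :: "bool \<Rightarrow> 'a set" where "assoc_sub e = (if e then B else A)"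

definition twist :: "bool \<Rightarrow> 'a \<Rightarrow> 'a" where "twist e = (if e then \<psi> else \<phi>)"

lemma bij_phi: "bij_betw \<phi> A B" using iso by (auto simp: iso_def)

lemma phi_in_B: "a \<in> A \<Longrightarrow> \<phi> a \<in> B" using iso by (auto simp: iso_def hom_def)

lemma phi_mult: "a \<in> A \<Longrightarrow> b \<in> A \<Longrightarrow> \<phi> (a \<otimes>\<^bsub>H\<^esub> b) = \<phi> a \<otimes>\<^bsub>H\<^esub> \<phi> b"
  using iso by (auto simp: iso_def hom_def)

lemma psi_in_A: "b \<in> B \<Longrightarrow> \<psi> b \<in> A"
  using bij_phi unfolding \<psi>_def by (metis bij_betw_def inv_into_into)

lemma phi_psi: "b \<in> B \<Longrightarrow> \<phi> (\<psi> b) = b"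
  using bij_phi unfolding \<psi>_def by (metis bij_betw_def f_inv_into_f)

lemma psi_phi: "a \<in> A \<Longrightarrow> \<psi> (\<phi> a) = a"
  using bij_phi unfolding \<psi>_def by (metis bij_betw_def inv_into_f_f)

lemma psi_mult:
  assumes "a \<in> B" "b \<in> B" shows "\<psi> (a \<otimes>\<^bsub>H\<^esub> b) = \<psi> a \<otimes>\<^bsub>H\<^esub> \<psi> b"
proof -
  have "\<psi> a \<otimes>\<^bsub>H\<^esub> \<psi> b \<in> A" using assms psi_in_A subgroup.m_closed[OF subgroup_A] by blast
  moreover have "\<phi> (\<psi> a \<otimes>\<^bsub>H\<^esub> \<psi> b) = a \<otimes>\<^bsub>H\<^esub> b" using assms by (simp add: phi_mult psi_in_A phi_psi)
  ultimately show ?thesis by (metis psi_phi)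
qed

lemma transversal_assoc_sub: "transversal (assoc_sub e) H"
  by (simp add: transversal_def group_H assoc_sub_def subgroup_A subgroup_B)

lemma assoc_sub_subset: "assoc_sub e \<subseteq> carrier H"
  using transversal.axioms(2)[OF transversal_assoc_sub] subgroup.subset by blast

lemma twist_in: "c \<in> assoc_sub e \<Longrightarrow> twist e c \<in> assoc_sub (\<not> e)"
  by (cases e) (auto simp: assoc_sub_def twist_def phi_in_B psi_in_A)

lemma twist_twist: "c \<in> assoc_sub e \<Longrightarrow> twist (\<not> e) (twist e c) = c"
  by (cases e) (auto simp: assoc_sub_def twist_def phi_psi psi_phi)

lemma twist_mult:
  "a \<in> assoc_sub e \<Longrightarrow> b \<in> assoc_sub e \<Longrightarrow> twist e (a \<otimes>\<^bsub>H\<^esub> b) = twist e a \<otimes>\<^bsub>H\<^esub> twist e b"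
  by (cases e) (auto simp: assoc_sub_def twist_def phi_mult psi_mult)

text \<open>A normal form \<open>(g, [(e\<^sub>1, r\<^sub>1), \<dots>, (e\<^sub>n, r\<^sub>n)])\<close> stands for
  \<open>g t\<^sub>1 r\<^sub>1 \<cdots> t\<^sub>n r\<^sub>n\<close> with \<open>t\<^sub>i = t\<close> if \<open>e\<^sub>i\<close> and \<open>t\<^sub>i = t\<inverse>\<close> otherwise; \<open>r\<^sub>i\<close>
  represents a right coset of \<open>assoc_sub e\<^sub>i\<close>, and is nontrivial if the next letter cancels
  \<open>t\<^sub>i\<close>.\<close>
fun reduced :: "(bool \<times> 'a) list \<Rightarrow> bool" where
  "reduced [] = True"
| "reduced ((e, r) # l) = (r \<in> carrier H \<and> coset_rep H (assoc_sub e) r = r \<and> reduced l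
     \<and> \<not> (r = \<one>\<^bsub>H\<^esub> \<and> starts_with (\<not> e) l))"

definition normal_forms :: "('a \<times> (bool \<times> 'a) list) set" where
  "normal_forms = carrier H \<times> Collect reduced"

definition act_H :: "'a \<Rightarrow> 'a \<times> (bool \<times> 'a) list \<Rightarrow> 'a \<times> (bool \<times> 'a) list" where
  "act_H h x = (h \<otimes>\<^bsub>H\<^esub> fst x, snd x)"

definition act_t :: "bool \<Rightarrow> 'a \<times> (bool \<times> 'a) list \<Rightarrow> 'a \<times> (bool \<times> 'a) list" where
  "act_t e x = (let c = subgroup_part H (assoc_sub e) (fst x); r = coset_rep H (assoc_sub e) (fst x) in
     if r = \<one>\<^bsub>H\<^esub> \<and> starts_with (\<not> e) (snd x) then (twist e c \<otimes>\<^bsub>H\<^esub> snd (hd (snd x)), tl (snd x))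
     else (twist e c, (e, r) # snd x))"

fun act :: "'a + bool \<Rightarrow> 'a \<times> (bool \<times> 'a) list \<Rightarrow> 'a \<times> (bool \<times> 'a) list" where
  "act (Inl h) = act_H h" | "act (Inr e) = act_t e"

lemma act_H_closed: "h \<in> carrier H \<Longrightarrow> x \<in> normal_forms \<Longrightarrow> act_H h x \<in> normal_forms"
  by (auto simp: act_H_def normal_forms_def)

lemma act_H_mult:
  "h1 \<in> carrier H \<Longrightarrow> h2 \<in> carrier H \<Longrightarrow> x \<in> normal_forms \<Longrightarrow>
    act_H h1 (act_H h2 x) = act_H (h1 \<otimes>\<^bsub>H\<^esub> h2) x"
  by (auto simp: act_H_def normal_forms_def H.m_assoc)

lemma act_H_one: "x \<in> normal_forms \<Longrightarrow> act_H \<one>\<^bsub>H\<^esub> x = x"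
  by (auto simp: act_H_def normal_forms_def)

lemma normal_forms_cases:
  assumes "x \<in> normal_forms"
  obtains (cancel) g r l where "x = (g, (\<not> e, r) # l)" "g \<in> assoc_sub e" "r \<in> carrier H"
     "coset_rep H (assoc_sub (\<not> e)) r = r" "reduced l" "\<not> (r = \<one>\<^bsub>H\<^esub> \<and> starts_with e l)"
     "act_t e x = (twist e g \<otimes>\<^bsub>H\<^esub> r, l)"
   | (push) g l where "x = (g, l)" "g \<in> carrier H" "reduced l"
     "\<not> (coset_rep H (assoc_sub e) g = \<one>\<^bsub>H\<^esub> \<and> starts_with (\<not> e) l)"
     "act_t e x = (twist e (subgroup_part H (assoc_sub e) g), (e, coset_rep H (assoc_sub e) g) # l)"
proof -
  interpret C: transversal "assoc_sub e" H by (rule transversal_assoc_sub)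
  obtain g l where x: "x = (g, l)" "g \<in> carrier H" "reduced l"
    using assms by (auto simp: normal_forms_def)
  show thesis
  proof (cases "coset_rep H (assoc_sub e) g = \<one>\<^bsub>H\<^esub> \<and> starts_with (\<not> e) l")
    case True
    then obtain r l' where l: "l = (\<not> e, r) # l'"
      by (cases l) auto
    have "g \<in> assoc_sub e" using True C.coset_rep_eq_one_iff x(2) by blast
    then show ?thesis
      using cancel x l True C.subgroup_part_of_mem by (auto simp: act_t_def Let_def)
  next
    case False
    then show ?thesis using push x by (auto simp: act_t_def Let_def)
  qed
qed

lemma act_t_closed: assumes "x \<in> normal_forms" shows "act_t e x \<in> normal_forms"
  using assms
proof (cases rule: normal_forms_cases[where e = e])
  case (cancel g r l)
  then show ?thesis
    using twist_in[of g e] assoc_sub_subset by (auto simp: normal_forms_def)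
next
  case (push g l)
  interpret C: transversal "assoc_sub e" H by (rule transversal_assoc_sub)
  show ?thesis
    using push twist_in[OF C.subgroup_part_in[OF push(2)]] assoc_sub_subset C.coset_rep_closed
      C.coset_rep_idem
    by (auto simp: normal_forms_def)
qed

lemma act_t_inverse: assumes "x \<in> normal_forms" shows "act_t (\<not> e) (act_t e x) = x"
  using assms
proof (cases rule: normal_forms_cases[where e = e])
  case (cancel g r l)
  interpret C': transversal "assoc_sub (\<not> e)" H by (rule transversal_assoc_sub)
  have "twist e g \<in> assoc_sub (\<not> e)" using twist_in[OF cancel(2)] .
  then have "coset_rep H (assoc_sub (\<not> e)) (twist e g \<otimes>\<^bsub>H\<^esub> r) = r"
      "subgroup_part H (assoc_sub (\<not> e)) (twist e g \<otimes>\<^bsub>H\<^esub> r) = twist e g"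
    using C'.factorization_unique cancel(3,4) by auto
  then show ?thesis
    using cancel twist_twist[OF cancel(2)] by (auto simp: act_t_def Let_def)
next
  case (push g l)
  interpret C: transversal "assoc_sub e" H by (rule transversal_assoc_sub)
  interpret C': transversal "assoc_sub (\<not> e)" H by (rule transversal_assoc_sub)
  have c: "subgroup_part H (assoc_sub e) g \<in> assoc_sub e" using C.subgroup_part_in[OF push(2)] .
  have t: "twist e (subgroup_part H (assoc_sub e) g) \<in> assoc_sub (\<not> e)" using twist_in[OF c] .
  show ?thesis
    using push t C'.coset_rep_of_mem[OF t] C'.subgroup_part_of_mem[OF t] twist_twist[OF c]
      C.subgroup_part_mult_coset_rep[OF push(2)]
    by (simp add: act_t_def Let_def)
qed

lemma act_t_conj:
  assumes "x \<in> normal_forms" "a \<in> assoc_sub (\<not> e)"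
  shows "act_t (\<not> e) (act_H a (act_t e x)) = act_H (twist (\<not> e) a) x"
  using assms(1)
proof (cases rule: normal_forms_cases[where e = e])
  case (cancel g r l)
  interpret C': transversal "assoc_sub (\<not> e)" H by (rule transversal_assoc_sub)
  have t: "twist e g \<in> assoc_sub (\<not> e)" using twist_in[OF cancel(2)] .
  have at: "a \<otimes>\<^bsub>H\<^esub> twist e g \<in> assoc_sub (\<not> e)" using C'.m_closed[OF assms(2) t] .
  have eq: "a \<otimes>\<^bsub>H\<^esub> (twist e g \<otimes>\<^bsub>H\<^esub> r) = (a \<otimes>\<^bsub>H\<^esub> twist e g) \<otimes>\<^bsub>H\<^esub> r"
    using assms(2) t cancel(3) assoc_sub_subset by (simp add: H.m_assoc subset_iff)
  have d: "coset_rep H (assoc_sub (\<not> e)) (a \<otimes>\<^bsub>H\<^esub> twist e g \<otimes>\<^bsub>H\<^esub> r) = r"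
          "subgroup_part H (assoc_sub (\<not> e)) (a \<otimes>\<^bsub>H\<^esub> twist e g \<otimes>\<^bsub>H\<^esub> r) = a \<otimes>\<^bsub>H\<^esub> twist e g"
    using C'.factorization_unique[OF at cancel(3,4)] by auto
  have m: "twist (\<not> e) (a \<otimes>\<^bsub>H\<^esub> twist e g) = twist (\<not> e) a \<otimes>\<^bsub>H\<^esub> g"
    using twist_mult[OF assms(2) t] twist_twist[OF cancel(2)] by simp
  have "act_t (\<not> e) (act_H a (twist e g \<otimes>\<^bsub>H\<^esub> r, l)) = (twist (\<not> e) a \<otimes>\<^bsub>H\<^esub> g, (\<not> e, r) # l)"
    using d m eq cancel(6) by (auto simp: act_t_def act_H_def Let_def)
  then show ?thesis using cancel(1,7) by (simp add: act_H_def)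
next
  case (push g l)
  interpret C: transversal "assoc_sub e" H by (rule transversal_assoc_sub)
  interpret C': transversal "assoc_sub (\<not> e)" H by (rule transversal_assoc_sub)
  have c: "subgroup_part H (assoc_sub e) g \<in> assoc_sub e" using C.subgroup_part_in[OF push(2)] .
  have t: "twist e (subgroup_part H (assoc_sub e) g) \<in> assoc_sub (\<not> e)" using twist_in[OF c] .
  have at: "a \<otimes>\<^bsub>H\<^esub> twist e (subgroup_part H (assoc_sub e) g) \<in> assoc_sub (\<not> e)"
    using C'.m_closed[OF assms(2) t] .
  have m: "twist (\<not> e) (a \<otimes>\<^bsub>H\<^esub> twist e (subgroup_part H (assoc_sub e) g)) =
      twist (\<not> e) a \<otimes>\<^bsub>H\<^esub> subgroup_part H (assoc_sub e) g"
    using twist_mult[OF assms(2) t] twist_twist[OF c] by simp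
  have eq: "twist (\<not> e) a \<otimes>\<^bsub>H\<^esub> subgroup_part H (assoc_sub e) g \<otimes>\<^bsub>H\<^esub> coset_rep H (assoc_sub e) g =
      twist (\<not> e) a \<otimes>\<^bsub>H\<^esub> g"
    using C.subgroup_part_mult_coset_rep[OF push(2)] twist_in[OF assms(2)] assoc_sub_subset c
      C.coset_rep_closed[OF push(2)]
    by (simp add: H.m_assoc subset_iff)
  show ?thesis
    using push at C'.coset_rep_of_mem[OF at] C'.subgroup_part_of_mem[OF at] m eq
    by (simp add: act_t_def act_H_def Let_def)
qed

end

context hnn_extension
begin

lemma A_subset: "A \<subseteq> carrier H" and B_subset: "B \<subseteq> carrier H"
  using assoc_sub_subset[of False] assoc_sub_subset[of True] by (simp_all add: assoc_sub_def)

lemma hnn_rel_lists: "hnn_rel H A \<phi> u v \<Longrightarrow> u \<in> lists (hnn_gens H) \<and> v \<in> lists (hnn_gens H)"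
  using A_subset B_subset phi_in_B by (auto simp: hnn_rel_def hnn_gens_def subset_iff image_iff)

lemma cong_hnn_rel_Inl:
  "a \<in> carrier H \<Longrightarrow> b \<in> carrier H \<Longrightarrow> cong_gen (hnn_rel H A \<phi>) [Inl a, Inl b] [Inl (a \<otimes>\<^bsub>H\<^esub> b)]"
  by (rule cong_gen.base) (auto simp: hnn_rel_def)

fun inv_letter :: "'a + bool \<Rightarrow> 'a + bool" where
  "inv_letter (Inl h) = Inl (inv\<^bsub>H\<^esub> h)" | "inv_letter (Inr e) = Inr (\<not> e)"

lemma inv_letter:
  assumes "y \<in> hnn_gens H"
  shows "inv_letter y \<in> hnn_gens H \<and> cong_gen (hnn_rel H A \<phi>) [inv_letter y, y] []"
proof (cases y)
  case (Inl h)
  then have h: "h \<in> carrier H" using assms by (auto simp: hnn_gens_def)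
  have "cong_gen (hnn_rel H A \<phi>) [Inl \<one>\<^bsub>H\<^esub>] []" by (rule cong_gen.base) (simp add: hnn_rel_def)
  then show ?thesis
    using Inl h cong_hnn_rel_Inl[of "inv\<^bsub>H\<^esub> h" h] by (auto simp: hnn_gens_def intro: cong_gen.trans)
next
  case (Inr e)
  have "cong_gen (hnn_rel H A \<phi>) [Inr (\<not> e), Inr e] []"
    by (rule cong_gen.base) (cases e; simp add: hnn_rel_def)
  then show ?thesis using Inr by (simp add: hnn_gens_def)
qed

lemma act_closed: "y \<in> hnn_gens H \<Longrightarrow> x \<in> normal_forms \<Longrightarrow> act y x \<in> normal_forms"
  by (auto simp: hnn_gens_def act_H_closed act_t_closed)

lemma foldr_act_closed:
  "w \<in> lists (hnn_gens H) \<Longrightarrow> x \<in> normal_forms \<Longrightarrow> foldr act w x \<in> normal_forms"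
  by (induction w) (auto simp: act_closed)

lemma act_hnn_rel:
  assumes "hnn_rel H A \<phi> u v" "x \<in> normal_forms"
  shows "foldr act u x = foldr act v x"
proof -
  have "act_t False (act_H a (act_t True x)) = act_H (\<phi> a) x" if "a \<in> A" for a
    using act_t_conj[OF assms(2), of a True] that by (simp add: assoc_sub_def twist_def)
  then show ?thesis
    using assms act_t_inverse[OF assms(2), of False] act_t_inverse[OF assms(2), of True]
    unfolding hnn_rel_def by (auto simp: act_H_mult act_H_one)
qed

lemma foldr_act_map_Inl:
  "set hs \<subseteq> carrier H \<Longrightarrow> x \<in> normal_forms \<Longrightarrow>
    foldr act (map Inl hs) x = act_H (word_prod H hs) x"
  by (induction hs) (auto simp: act_H_one act_H_mult H.word_prod_closed)

lemma act_t_new_syllable: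
  assumes "x \<in> normal_forms"
    and "\<not> (coset_rep H (assoc_sub e) (fst x) = \<one>\<^bsub>H\<^esub> \<and> starts_with (\<not> e) (snd x))"
  shows "\<exists>g r. act_t e x = (g, (e, r) # snd x) \<and> g \<in> assoc_sub (\<not> e)"
  using assms(1)
proof (cases rule: normal_forms_cases[where e = e])
  case (cancel g r l)
  interpret C: transversal "assoc_sub e" H by (rule transversal_assoc_sub)
  show ?thesis using cancel assms(2) C.coset_rep_of_mem by simp
next
  case (push g l)
  interpret C: transversal "assoc_sub e" H by (rule transversal_assoc_sub)
  show ?thesis using push twist_in[OF C.subgroup_part_in[OF push(2)]] by simp
qed

end

locale hnn_extension_gens = hnn_extension +
  fixes SH :: "'a set"
  assumes SH_subset: "SH \<subseteq> carrier H" and assoc_subset_SH: "A \<union> B \<subseteq> SH"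
begin

definition letters :: "('a + bool) set" where
  "letters = Inl ` SH \<union> Inr ` UNIV"

definition base_point :: "'a \<times> (bool \<times> 'a) list" where
  "base_point = (\<one>\<^bsub>H\<^esub>, [])"

definition shortenable :: "('a + bool) list \<Rightarrow> bool" where
  "shortenable w \<longleftrightarrow> (\<exists>w' \<in> lists letters. length w' < length w
      \<and> (\<forall>x\<in>normal_forms. foldr act w' x = foldr act w x))"

lemma letters_subset: "letters \<subseteq> hnn_gens H"
  using SH_subset by (auto simp: letters_def hnn_gens_def)

lemma base_point_in_normal_forms: "base_point \<in> normal_forms"
  by (simp add: base_point_def normal_forms_def)

lemma foldr_letters_closed:
  "w \<in> lists letters \<Longrightarrow> x \<in> normal_forms \<Longrightarrow> foldr act w x \<in> normal_forms"
  using foldr_act_closed lists_mono[OF letters_subset] by blast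

lemma map_Inl_in_letters: "set hs \<subseteq> SH \<Longrightarrow> map Inl hs \<in> lists letters"
  by (induction hs) (auto simp: letters_def)

lemma shortenable_append_left:
  assumes "shortenable v" "u \<in> lists letters" shows "shortenable (u @ v)"
proof -
  obtain v' where "v' \<in> lists letters" "length v' < length v"
      "\<forall>x\<in>normal_forms. foldr act v' x = foldr act v x"
    using assms(1) by (auto simp: shortenable_def)
  then show ?thesis
    unfolding shortenable_def using assms(2) by (intro bexI[of _ "u @ v'"]) auto
qed

lemma shortenable_append_right:
  assumes "shortenable u" "v \<in> lists letters" shows "shortenable (u @ v)"
proof -
  obtain u' where "u' \<in> lists letters" "length u' < length u"
      "\<forall>x\<in>normal_forms. foldr act u' x = foldr act u x"
    using assms(1) by (auto simp: shortenable_def)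
  then show ?thesis
    unfolding shortenable_def using assms(2) foldr_letters_closed
    by (intro bexI[of _ "u' @ v"]) auto
qed

end

context hnn_extension_gens
begin

lemma shortenable_or_t_syllable:
  "v \<in> lists letters \<Longrightarrow> v = Inr e # rest \<Longrightarrow>
    shortenable v \<or> (\<exists>g r l. foldr act v base_point = (g, (e, r) # l) \<and> g \<in> assoc_sub (\<not> e))"
proof (induction "length v" arbitrary: v e rest rule: less_induct)
  case less
  have rest: "rest \<in> lists letters" using less.prems by auto
  obtain hs v' where hv: "rest = map Inl hs @ v'" "set hs \<subseteq> SH"
      "v' = [] \<or> (\<exists>e' v''. v' = Inr e' # v'' \<and> v'' \<in> lists letters)"
    using split_Inl_prefix[OF rest[unfolded letters_def]] unfolding letters_def by blast
  have hs: "set hs \<subseteq> carrier H" using hv(2) SH_subset by auto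
  define p where "p = word_prod H hs"
  have p: "p \<in> carrier H" using H.word_prod_closed[OF hs] by (simp add: p_def)
  have v': "v' \<in> lists letters" using hv(3) by (auto simp: letters_def)
  define y where "y = foldr act v' base_point"
  have y: "y \<in> normal_forms"
    using foldr_letters_closed[OF v' base_point_in_normal_forms] by (simp add: y_def)
  have fold_v: "foldr act v base_point = act_t e (act_H p y)"
    using less.prems(2) hv(1) foldr_act_map_Inl[OF hs y] by (simp add: p_def y_def)
  have t_syllable: "\<exists>g r l. foldr act v base_point = (g, (e, r) # l) \<and> g \<in> assoc_sub (\<not> e)"
    if no_cancel: "\<not> (coset_rep H (assoc_sub e) (p \<otimes>\<^bsub>H\<^esub> fst y) = \<one>\<^bsub>H\<^esub> \<and> starts_with (\<not> e) (snd y))"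
  proof -
    obtain g r where "act_t e (act_H p y) = (g, (e, r) # snd y)" "g \<in> assoc_sub (\<not> e)"
      using act_t_new_syllable[OF act_H_closed[OF p y], of e] no_cancel by (auto simp: act_H_def)
    then show ?thesis using fold_v by auto
  qed
  consider "v' = []" | e' v'' where "v' = Inr e' # v''" "v'' \<in> lists letters"
    using hv(3) by blast
  then show ?case
  proof cases
    case 1
    then show ?thesis using t_syllable by (simp add: y_def base_point_def)
  next
    case (2 e' v'')
    show ?thesis
    proof (cases "e' = (\<not> e) \<and> p \<in> assoc_sub e")
      case True
      let ?seg = "Inr e # map Inl hs @ [Inr e']"
      have "shortenable ?seg" unfolding shortenable_def
      proof (intro bexI[of _ "[Inl (twist e p)]"] conjI ballI)
        have "twist e p \<in> assoc_sub (\<not> e)" using twist_in True by blast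
        then show "[Inl (twist e p)] \<in> lists letters"
          using assoc_subset_SH by (cases e) (auto simp: assoc_sub_def letters_def)
        show "length [Inl (twist e p)] < length ?seg" by simp
        fix x assume x: "x \<in> normal_forms"
        have "foldr act ?seg x = act_t e (act_H p (act_t (\<not> e) x))"
          using foldr_act_map_Inl[OF hs act_t_closed[OF x]] True by (simp add: p_def)
        also have "\<dots> = act_H (twist e p) x"
          using act_t_conj[OF x, of p "\<not> e"] True by simp
        finally show "foldr act [Inl (twist e p)] x = foldr act ?seg x" by simp
      qed
      then have "shortenable (?seg @ v'')" using shortenable_append_right 2(2) by blast
      then show ?thesis using less.prems(2) hv(1) 2(1) by simp
    next
      case False
      have "length v' < length v" using less.prems(2) hv(1) by simp
      then have "shortenable v' \<or> (\<exists>g r l. y = (g, (e', r) # l) \<and> g \<in> assoc_sub (\<not> e'))"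
        using less.hyps v' 2(1) by (simp add: y_def)
      then show ?thesis
      proof
        assume "shortenable v'"
        moreover have "Inr e # map Inl hs \<in> lists letters"
          using map_Inl_in_letters[OF hv(2)] by (simp add: letters_def)
        ultimately have "shortenable ((Inr e # map Inl hs) @ v')"
          by (rule shortenable_append_left)
        then show ?thesis using less.prems(2) hv(1) by simp
      next
        assume "\<exists>g r l. y = (g, (e', r) # l) \<and> g \<in> assoc_sub (\<not> e')"
        then obtain g r l where gl: "y = (g, (e', r) # l)" "g \<in> assoc_sub (\<not> e')" by blast
        interpret C: transversal "assoc_sub e" H by (rule transversal_assoc_sub)
        have "\<not> (coset_rep H (assoc_sub e) (p \<otimes>\<^bsub>H\<^esub> g) = \<one>\<^bsub>H\<^esub> \<and> e' = (\<not> e))"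
        proof
          assume cancel: "coset_rep H (assoc_sub e) (p \<otimes>\<^bsub>H\<^esub> g) = \<one>\<^bsub>H\<^esub> \<and> e' = (\<not> e)"
          then have g: "g \<in> assoc_sub e" using gl(2) by simp
          then have g_carrier: "g \<in> carrier H" using assoc_sub_subset by blast
          have "p \<otimes>\<^bsub>H\<^esub> g \<in> assoc_sub e"
            using cancel C.coset_rep_eq_one_iff[OF H.m_closed[OF p g_carrier]] by simp
          then have "p \<otimes>\<^bsub>H\<^esub> g \<otimes>\<^bsub>H\<^esub> inv\<^bsub>H\<^esub> g \<in> assoc_sub e"
            using C.m_closed C.m_inv_closed[OF g] by blast
          then have "p \<in> assoc_sub e" using p g_carrier by (simp add: H.m_assoc)
          then show False using False cancel by simp
        qed
        then show ?thesis using t_syllable gl(1) by simp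
      qed
    qed
  qed
qed

lemma shorten_to_H_word:
  "w \<in> lists letters \<Longrightarrow> h \<in> carrier H \<Longrightarrow> foldr act w base_point = (h, []) \<Longrightarrow>
    \<exists>ss. set ss \<subseteq> SH \<and> length ss \<le> length w \<and> word_prod H ss = h"
proof (induction "length w" arbitrary: w rule: less_induct)
  case less
  obtain hs v where hv: "w = map Inl hs @ v" "set hs \<subseteq> SH"
      "v = [] \<or> (\<exists>e v'. v = Inr e # v' \<and> v' \<in> lists letters)"
    using split_Inl_prefix[OF less.prems(1)[unfolded letters_def]] unfolding letters_def by blast
  have hs: "set hs \<subseteq> carrier H" using hv(2) SH_subset by auto
  have v: "v \<in> lists letters" using hv(3) by (auto simp: letters_def)
  have fold_w: "foldr act w base_point = act_H (word_prod H hs) (foldr act v base_point)"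
    using hv(1) foldr_act_map_Inl[OF hs foldr_letters_closed[OF v base_point_in_normal_forms]]
    by simp
  consider "v = []" | e v' where "v = Inr e # v'" using hv(3) by blast
  then show ?case
  proof cases
    case 1
    then have "word_prod H hs = h"
      using fold_w less.prems(3) H.word_prod_closed[OF hs] by (simp add: act_H_def base_point_def)
    then show ?thesis using hv(1,2) 1 by auto
  next
    case (2 e v')
    from shortenable_or_t_syllable[OF v 2] show ?thesis
    proof
      assume "shortenable v"
      then have "shortenable w"
        using shortenable_append_left map_Inl_in_letters[OF hv(2)] hv(1) by simp
      then obtain w' where w': "w' \<in> lists letters" "length w' < length w"
          "\<forall>x\<in>normal_forms. foldr act w' x = foldr act w x"
        unfolding shortenable_def by blast
      then have "foldr act w' base_point = (h, [])"
        using less.prems(3) base_point_in_normal_forms by simp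
      then show ?thesis using less.hyps[OF w'(2) w'(1) less.prems(2)] w'(2) by fastforce
    next
      assume "\<exists>g r l. foldr act v base_point = (g, (e, r) # l) \<and> g \<in> assoc_sub (\<not> e)"
      then show ?thesis using fold_w less.prems(3) by (auto simp: act_H_def)
    qed
  qed
qed

lemma shorten_hnn_word:
  assumes "w \<in> lists letters" "h \<in> carrier H" "cong_gen (hnn_rel H A \<phi>) w [Inl h]"
  shows "\<exists>ss. set ss \<subseteq> SH \<and> length ss \<le> length w \<and> word_prod H ss = h"
proof -
  have "foldr act w base_point = foldr act [Inl h] base_point"
    using cong_gen_foldr_eq[OF assms(3) _ hnn_rel_lists act_closed act_hnn_rel
        base_point_in_normal_forms] assms(1) letters_subset by blast
  then show ?thesis
    using shorten_to_H_word assms(1,2) by (simp add: act_H_def base_point_def)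
qed

end

lemma (in hnn_extension) hnn_has_isometric_word_metrics:
  assumes "finitely_generated H" "finite A" "finite B"
  shows "has_isometric_word_metrics H (hnn H A \<phi>) (hnn_incl H A \<phi>)"
proof -
  obtain SH where SH: "finite SH" "SH \<subseteq> carrier H" "\<forall>s\<in>SH. inv\<^bsub>H\<^esub> s \<in> SH"
      "generate H SH = carrier H" "A \<union> B \<subseteq> SH"
    by (rule H.finite_symmetric_generating_set[OF assms(1) finite_UnI[OF assms(2,3)]])
      (use A_subset B_subset in auto)
  interpret hnn_extension_gens H A B \<phi> SH using SH by unfold_locales auto
  let ?Y = "hnn_gens H" and ?R = "hnn_rel H A \<phi>"
  define Y0 :: "('a + bool) set" where "Y0 = Inl ` SH \<union> range Inr"
  have Y0: "Y0 \<subseteq> ?Y" using SH by (auto simp: Y0_def hnn_gens_def)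
  have SH_Y0: "Inl ` SH \<subseteq> Y0" by (auto simp: Y0_def)
  have P: "group (presented ?Y ?R)" by (rule group_presented[OF inv_letter])
  have hom_H: "group_hom H (presented ?Y ?R) (\<lambda>h. pres_class ?Y ?R [Inl h])"
    by (rule group_hom_presented_letters[OF group_H P _ cong_hnn_rel_Inl]) (auto simp: hnn_gens_def)
  have "has_isometric_word_metrics H (presented ?Y ?R) (\<lambda>h. pres_class ?Y ?R [Inl h])"
  proof (rule presented_isometric_word_metricsI[OF group_H inv_letter _ cong_hnn_rel_Inl SH(1-4)])
    show "Inl ` carrier H \<subseteq> ?Y" by (auto simp: hnn_gens_def)
    show "finite Y0" using SH by (simp add: Y0_def)
    show "Inl ` SH \<subseteq> Y0" by (fact SH_Y0)
    show "Y0 \<subseteq> ?Y" by (fact Y0)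
    show "inv_letter y \<in> Y0" if "y \<in> Y0" for y using that SH(3) by (auto simp: Y0_def)
    show "pres_class ?Y ?R [y] \<in> generate (presented ?Y ?R) ((\<lambda>y. pres_class ?Y ?R [y]) ` Y0)"
      if "y \<in> ?Y" for y
      using that presented_letters_in_generate[OF hom_H SH(2,4) Y0 SH_Y0]
      by (auto simp: hnn_gens_def Y0_def intro: generate.incl)
    show "\<exists>ss. set ss \<subseteq> SH \<and> length ss \<le> length w \<and> word_prod H ss = h"
      if "w \<in> lists Y0" "h \<in> carrier H" "cong_gen ?R w [Inl h]" for w h
      using shorten_hnn_word that by (simp add: Y0_def letters_def)
  qed
  then show ?thesis by (simp add: hnn_def hnn_incl_def[abs_def])
qed

theorem lemma3p2:
  fixes H :: "('a,'c) monoid_scheme" and K :: "('k,'d) monoid_scheme"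
  assumes "group H" and "finitely_generated H"
  shows
   "(\<forall>(A::'a set) (B::'k set) (\<phi>::'a \<Rightarrow> 'k).
       group K \<and> finitely_generated K \<and> subgroup A H \<and> subgroup B K \<and> finite A \<and> finite B
       \<and> \<phi> \<in> iso (H\<lparr>carrier := A\<rparr>) (K\<lparr>carrier := B\<rparr>)
       \<longrightarrow> (let G = amalg H K A \<phi>; \<iota> = amalg_incl H K A \<phi> in
            (\<exists>SH SG. finite SH \<and> SH \<subseteq> carrier H \<and> generate H SH = carrier H
               \<and> (\<forall>s\<in>SH. inv\<^bsub>H\<^esub> s \<in> SH)
               \<and> finite SG \<and> SG \<subseteq> carrier G \<and> generate G SG = carrier G
               \<and> (\<forall>s\<in>SG. inv\<^bsub>G\<^esub> s \<in> SG)
               \<and> \<iota> ` SH \<subseteq> SG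
               \<and> (\<forall>h1\<in>carrier H. \<forall>h2\<in>carrier H.
                    word_dist H SH h1 h2 = word_dist G SG (\<iota> h1) (\<iota> h2)))))
    \<and> (\<forall>(A::'a set) (B::'a set) (\<phi>::'a \<Rightarrow> 'a).
       subgroup A H \<and> subgroup B H \<and> finite A \<and> finite B
       \<and> \<phi> \<in> iso (H\<lparr>carrier := A\<rparr>) (H\<lparr>carrier := B\<rparr>)
       \<longrightarrow> (let G = hnn H A \<phi>; \<iota> = hnn_incl H A \<phi> in
            (\<exists>SH SG. finite SH \<and> SH \<subseteq> carrier H \<and> generate H SH = carrier H
               \<and> (\<forall>s\<in>SH. inv\<^bsub>H\<^esub> s \<in> SH)
               \<and> finite SG \<and> SG \<subseteq> carrier G \<and> generate G SG = carrier G
               \<and> (\<forall>s\<in>SG. inv\<^bsub>G\<^esub> s \<in> SG)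
               \<and> \<iota> ` SH \<subseteq> SG
               \<and> (\<forall>h1\<in>carrier H. \<forall>h2\<in>carrier H.
                    word_dist H SH h1 h2 = word_dist G SG (\<iota> h1) (\<iota> h2)))))"
proof -
  have amalg: "has_isometric_word_metrics H (amalg H K A \<phi>) (amalg_incl H K A \<phi>)"
    if "group K" "finitely_generated K" "subgroup A H" "subgroup B K" "finite A"
      "\<phi> \<in> iso (H\<lparr>carrier := A\<rparr>) (K\<lparr>carrier := B\<rparr>)" for A B \<phi>
  proof -
    interpret amalgam H K A B \<phi> using assms(1) that by (simp add: amalgam_def)
    show ?thesis using assms(2) that(2,5) by (rule amalg_has_isometric_word_metrics)
  qed
  have hnn: "has_isometric_word_metrics H (hnn H A \<phi>) (hnn_incl H A \<phi>)"
    if "subgroup A H" "subgroup B H" "finite A" "finite B"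
      "\<phi> \<in> iso (H\<lparr>carrier := A\<rparr>) (H\<lparr>carrier := B\<rparr>)" for A B \<phi>
  proof -
    interpret hnn_extension H A B \<phi> using assms(1) that by (simp add: hnn_extension_def)
    show ?thesis using assms(2) that(3,4) by (rule hnn_has_isometric_word_metrics)
  qed
  show ?thesis
    unfolding Let_def has_isometric_word_metrics_def[symmetric] using amalg hnn by blast
qed

end
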